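(* Let $\mathcal{R}$ be the Ramond-Block algebra with parameter $q\in\mathbb{C}^*$. Let $\lambda,\mu\in\mathbb{C}^*$ and $a,a',b,b'\in\mathbb{C}$. Then: (1) the $\mathbb{Z}_2$-graded space $\Omega_{\mathcal{R}}(\lambda,a,b)=\mathbb{C}[t^2]\oplus t\mathbb{C}[t^2]$ with the action described in the context is an $\mathcal{R}$-module; (2) $\Omega_{\mathcal{R}}(\lambda,a,b)$ is simple if and only if $a\neq 0$ or $b\neq 0$; (3) $\Omega_{\mathcal{R}}(\lambda,a,b)\cong\Omega_{\mathcal{R}}(\mu,a',b')$ as $\mathcal{R}$-modules if and only if $\lambda=\mu$, $a=a'$ and $b=b'$; (4) any $\mathcal{R}$-module which is free of rank $1$ as a $U(\eta)$-module, where $\eta=\mathbb{C}L_{0,0}\oplus\mathbb{C}G_{0,0}$, is isomorphic to $\Omega_{\mathcal{R}}(\lambda,a,b)$ for some $\lambda\in\mathbb{C}^*$ and $a,b\in\mathbb{C}$.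
   Context: Fix $q\in\mathbb{C}^*$. The Ramond-Block algebra $\mathcal{R}$ is the Lie superalgebra over $\mathbb{C}$ whose even part has basis $\{L_{m,i}\mid m\in\mathbb{Z}, i\in\mathbb{Z}_+\}$ and whose odd part has basis $\{G_{l,j}\mid l\in\mathbb{Z}, j\in\mathbb{Z}_+\}$ (here $\mathbb{Z}_+=\{0,1,2,\dots\}$), with brackets $[L_{m,i},L_{n,j}]=(n(i+q)-m(j+q))L_{m+n,i+j}$, $[L_{m,i},G_{l,j}]=(l(i+q)-m(j+\frac{q}{2}))G_{m+l,i+j}$, $[G_{l,i},G_{r,j}]=2qL_{l+r,i+j}$. All modules are supermodules (odd elements shift parity). $U(\eta)$ is the universal enveloping algebra of $\eta$. For $\lambda\in\mathbb{C}^*$, $a,b\in\mathbb{C}$, $\Omega_{\mathcal{R}}(\lambda,a,b)=\mathbb{C}[t^2]\oplus t\mathbb{C}[t^2]$ has even part $\mathbb{C}[t^2]$ and odd part $t\mathbb{C}[t^2]$, with action, for $f\in\mathbb{C}[t^2]$, $m\in\mathbb{Z}$, $i\in\mathbb{Z}_+$ ($\delta$ the Kronecker delta): $L_{m,i}f(t^2)=\lambda^m(\delta_{i,0}(t^2-mqa)+\delta_{q,-1}\delta_{i,1}b)f(t^2-mq)$, $L_{m,i}tf(t^2)=\lambda^m t(\delta_{i,0}(t^2-mqa-\frac{mq}{2})+\delta_{q,-1}\delta_{i,1}b)f(t^2-mq)$, $G_{m,i}f(t^2)=\lambda^m\delta_{i,0}tf(t^2-mq)$, $G_{m,i}tf(t^2)=q\lambda^m(\delta_{i,0}(t^2-2mqa)+2\delta_{q,-1}\delta_{i,1}b)f(t^2-mq)$.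 *)

theory Defs
  imports "HOL-Computational_Algebra.Polynomial" "HOL-Library.Product_Plus" Complex_Main
begin

datatype rb_basis = L int nat | G int nat

definition cvs :: "(complex \<Rightarrow> 'v::ab_group_add \<Rightarrow> 'v) \<Rightarrow> bool" where
  "cvs smul \<longleftrightarrow>
     (\<forall>c x y. smul c (x + y) = smul c x + smul c y) \<and>
     (\<forall>c d x. smul (c + d) x = smul c x + smul d x) \<and>
     (\<forall>c d x. smul c (smul d x) = smul (c * d) x) \<and>
     (\<forall>x. smul 1 x = x)"

definition subspace_of :: "(complex \<Rightarrow> 'v::ab_group_add \<Rightarrow> 'v) \<Rightarrow> 'v set \<Rightarrow> bool" where
  "subspace_of smul W \<longleftrightarrow> 0 \<in> W \<and> (\<forall>x\<in>W. \<forall>y\<in>W. x + y \<in> W) \<and> (\<forall>c. \<forall>x\<in>W. smul c x \<in> W)"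

definition super_vs :: "(complex \<Rightarrow> 'v::ab_group_add \<Rightarrow> 'v) \<Rightarrow> 'v set \<Rightarrow> 'v set \<Rightarrow> bool" where
  "super_vs smul V0 V1 \<longleftrightarrow> cvs smul \<and> subspace_of smul V0 \<and> subspace_of smul V1 \<and>
     V0 \<inter> V1 = {0} \<and> (\<forall>x. \<exists>x0\<in>V0. \<exists>x1\<in>V1. x = x0 + x1)"

definition clinear_map :: "(complex \<Rightarrow> 'v::ab_group_add \<Rightarrow> 'v) \<Rightarrow> (complex \<Rightarrow> 'w::ab_group_add \<Rightarrow> 'w)
     \<Rightarrow> ('v \<Rightarrow> 'w) \<Rightarrow> bool" where
  "clinear_map smul smul' f \<longleftrightarrow> (\<forall>x y. f (x + y) = f x + f y) \<and> (\<forall>c x. f (smul c x) = smul' c (f x))"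

definition cLL :: "complex \<Rightarrow> int \<Rightarrow> nat \<Rightarrow> int \<Rightarrow> nat \<Rightarrow> complex" where
  "cLL q m i n j = of_int n * (of_nat i + q) - of_int m * (of_nat j + q)"

definition cLG :: "complex \<Rightarrow> int \<Rightarrow> nat \<Rightarrow> int \<Rightarrow> nat \<Rightarrow> complex" where
  "cLG q m i l j = of_int l * (of_nat i + q) - of_int m * (of_nat j + q / 2)"

text \<open>This is the same as a module over the Lie superalgebra R, since R has the given basis.\<close>
definition R_module :: "complex \<Rightarrow> (complex \<Rightarrow> 'v::ab_group_add \<Rightarrow> 'v) \<Rightarrow> 'v set \<Rightarrow> 'v set
     \<Rightarrow> (rb_basis \<Rightarrow> 'v \<Rightarrow> 'v) \<Rightarrow> bool" where
  "R_module q smul V0 V1 act \<longleftrightarrow>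
     super_vs smul V0 V1 \<and>
     (\<forall>x. clinear_map smul smul (act x)) \<and>
     (\<forall>m i. act (L m i) ` V0 \<subseteq> V0 \<and> act (L m i) ` V1 \<subseteq> V1) \<and>
     (\<forall>m i. act (G m i) ` V0 \<subseteq> V1 \<and> act (G m i) ` V1 \<subseteq> V0) \<and>
     (\<forall>m i n j v. act (L m i) (act (L n j) v) - act (L n j) (act (L m i) v)
                    = smul (cLL q m i n j) (act (L (m + n) (i + j)) v)) \<and>
     (\<forall>m i l j v. act (L m i) (act (G l j) v) - act (G l j) (act (L m i) v)
                    = smul (cLG q m i l j) (act (G (m + l) (i + j)) v)) \<and>
     (\<forall>l i r j v. act (G l i) (act (G r j) v) + act (G r j) (act (G l i) v)
                    = smul (2 * q) (act (L (l + r) (i + j)) v))"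

definition R_submodule :: "(complex \<Rightarrow> 'v::ab_group_add \<Rightarrow> 'v) \<Rightarrow> 'v set \<Rightarrow> 'v set
     \<Rightarrow> (rb_basis \<Rightarrow> 'v \<Rightarrow> 'v) \<Rightarrow> 'v set \<Rightarrow> bool" where
  "R_submodule smul V0 V1 act W \<longleftrightarrow>
     subspace_of smul W \<and> (\<forall>x. \<forall>w\<in>W. act x w \<in> W) \<and>
     (\<forall>w\<in>W. \<exists>w0\<in>W \<inter> V0. \<exists>w1\<in>W \<inter> V1. w = w0 + w1)"

definition R_simple :: "complex \<Rightarrow> (complex \<Rightarrow> 'v::ab_group_add \<Rightarrow> 'v) \<Rightarrow> 'v set \<Rightarrow> 'v set
     \<Rightarrow> (rb_basis \<Rightarrow> 'v \<Rightarrow> 'v) \<Rightarrow> bool" where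
  "R_simple q smul V0 V1 act \<longleftrightarrow> R_module q smul V0 V1 act \<and> (\<exists>v::'v. v \<noteq> 0) \<and>
     (\<forall>W. R_submodule smul V0 V1 act W \<longrightarrow> W = {0} \<or> W = UNIV)"

definition R_iso :: "(complex \<Rightarrow> 'v::ab_group_add \<Rightarrow> 'v) \<Rightarrow> 'v set \<Rightarrow> 'v set \<Rightarrow> (rb_basis \<Rightarrow> 'v \<Rightarrow> 'v)
     \<Rightarrow> (complex \<Rightarrow> 'w::ab_group_add \<Rightarrow> 'w) \<Rightarrow> 'w set \<Rightarrow> 'w set \<Rightarrow> (rb_basis \<Rightarrow> 'w \<Rightarrow> 'w)
     \<Rightarrow> ('v \<Rightarrow> 'w) \<Rightarrow> bool" where
  "R_iso smul V0 V1 act smul' W0 W1 act' \<phi> \<longleftrightarrow>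
     bij \<phi> \<and> clinear_map smul smul' \<phi> \<and> \<phi> ` V0 \<subseteq> W0 \<and> \<phi> ` V1 \<subseteq> W1 \<and>
     (\<forall>x v. \<phi> (act x v) = act' x (\<phi> v))"

definition R_isomorphic :: "(complex \<Rightarrow> 'v::ab_group_add \<Rightarrow> 'v) \<Rightarrow> 'v set \<Rightarrow> 'v set \<Rightarrow> (rb_basis \<Rightarrow> 'v \<Rightarrow> 'v)
     \<Rightarrow> (complex \<Rightarrow> 'w::ab_group_add \<Rightarrow> 'w) \<Rightarrow> 'w set \<Rightarrow> 'w set \<Rightarrow> (rb_basis \<Rightarrow> 'w \<Rightarrow> 'w) \<Rightarrow> bool" where
  "R_isomorphic smul V0 V1 act smul' W0 W1 act' \<longleftrightarrow> (\<exists>\<phi>. R_iso smul V0 V1 act smul' W0 W1 act' \<phi>)"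

definition is_basis :: "(complex \<Rightarrow> 'v::ab_group_add \<Rightarrow> 'v) \<Rightarrow> ('i \<Rightarrow> 'v) \<Rightarrow> bool" where
  "is_basis smul e \<longleftrightarrow>
     (\<forall>x. \<exists>c. finite {i. c i \<noteq> 0} \<and> x = (\<Sum>i\<in>{i. c i \<noteq> 0}. smul (c i) (e i))) \<and>
     (\<forall>c. finite {i. c i \<noteq> 0} \<and> (\<Sum>i\<in>{i. c i \<noteq> 0}. smul (c i) (e i)) = 0 \<longrightarrow> (\<forall>i. c i = 0))"

text \<open>By PBW, U(eta) has basis L_{0,0}^k G_{0,0}^e (k \<in> N, e \<in> {0,1}).  The module is
  free of rank 1 over U(eta) (on an even generator v) iff u \<mapsto> u v is bijective, i.e.
  iff the vectors L_{0,0}^k G_{0,0}^e v form a basis.\<close>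
definition U_eta_free_rank1 :: "(complex \<Rightarrow> 'v::ab_group_add \<Rightarrow> 'v) \<Rightarrow> 'v set
     \<Rightarrow> (rb_basis \<Rightarrow> 'v \<Rightarrow> 'v) \<Rightarrow> bool" where
  "U_eta_free_rank1 smul V0 act \<longleftrightarrow>
     (\<exists>v\<in>V0. is_basis smul
        (\<lambda>(k::nat, e::bool). (act (L 0 0) ^^ k) (if e then act (G 0 0) v else v)))"

text \<open>Omega = C[t^2] \<oplus> t C[t^2]; the pair (f, g) of polynomials in one variable x
  represents f(t^2) + t g(t^2).  Even part: g = 0; odd part: f = 0.\<close>
type_synonym omega = "complex poly \<times> complex poly"

definition Omega_smul :: "complex \<Rightarrow> omega \<Rightarrow> omega" where
  "Omega_smul c v = (smult c (fst v), smult c (snd v))"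

definition Omega_even :: "omega set" where "Omega_even = {v. snd v = 0}"
definition Omega_odd :: "omega set" where "Omega_odd = {v. fst v = 0}"

definition shift :: "complex \<Rightarrow> complex poly \<Rightarrow> complex poly" where
  "shift c f = pcompose f [:- c, 1:]"

definition kd :: "bool \<Rightarrow> complex" where "kd P = (if P then 1 else 0)"

definition Omega_act :: "complex \<Rightarrow> complex \<Rightarrow> complex \<Rightarrow> complex \<Rightarrow> rb_basis \<Rightarrow> omega \<Rightarrow> omega" where
  "Omega_act q lam a b x v = (case x of
     L m i \<Rightarrow>
       (smult (lam powi m)
          (smult (kd (i = 0)) [:- (of_int m * q * a), 1:] + [: kd (q = -1) * kd (i = 1) * b :])
          * shift (of_int m * q) (fst v),
        smult (lam powi m)
          (smult (kd (i = 0)) [:- (of_int m * q * a) - of_int m * q / 2, 1:] + [: kd (q = -1) * kd (i = 1) * b :])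
          * shift (of_int m * q) (snd v))
   | G m i \<Rightarrow>
       (smult (q * lam powi m)
          (smult (kd (i = 0)) [:- (2 * of_int m * q * a), 1:] + [: 2 * kd (q = -1) * kd (i = 1) * b :])
          * shift (of_int m * q) (snd v),
        smult (lam powi m * kd (i = 0)) (shift (of_int m * q) (fst v))))"

end

theory Submission
  imports Defs "HOL-Computational_Algebra.Fundamental_Theorem_Algebra"
begin

(* Writing a vector of Omega as a pair (f, g) of polynomials in x = t^2, L_{0,0} acts as
   multiplication by x, and [L_{0,0}, X_{m,i}] = m q X_{m,i} forces every basis element X_{m,i}
   to act as the shift x |-> x - m q followed by multiplication by a polynomial.  A module that
   is free of rank one over U(eta) has this shape in the coordinates given by the PBW basis of
   U(eta), and the brackets of R become functional equations for the four families of
   polynomials.  At level i = 0 they are Witt-type equations with solutions lambda^m (x + alpha m);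
   at the levels i >= 1 everything vanishes, except at i = 1 when q = -1, where a constant b
   survives.  This classification gives (1) and (4).  An isomorphism between two modules Omega
   commutes with L_{0,0} and G_{0,0}, hence is multiplication by a nonzero constant, which
   gives (3).  For (2), the even part of a nonzero submodule is a nonzero ideal of C[x] that is
   stable under the shifts; if a or b is nonzero its generator can have no root, while for
   a = b = 0 the pairs (f, g) with f(0) = 0 form a proper submodule. *)

lemma poly_ext_iff: "(p::complex poly) = r \<longleftrightarrow> (\<forall>x. poly p x = poly r x)"
  by (simp add: poly_eq_poly_eq_iff[symmetric] fun_eq_iff)

lemma poly_shift [simp]: "poly (shift c p) x = poly p (x - c)"
  by (simp add: shift_def poly_pcompose)

lemma shift_0 [simp]: "shift 0 p = p"
  and shift_zero [simp]: "shift c 0 = 0"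
  and shift_one [simp]: "shift c 1 = 1"
  and shift_const [simp]: "shift c [:a:] = [:a:]"
  and shift_linear [simp]: "shift c [:a, b:] = [:a - b * c, b:]"
  by (simp_all add: poly_ext_iff algebra_simps)

lemma shift_add: "shift c (p + r) = shift c p + shift c r"
  and shift_mult: "shift c (p * r) = shift c p * shift c r"
  and shift_smult: "shift c (smult a p) = smult a (shift c p)"
  and shift_shift: "shift c (shift d p) = shift (c + d) p"
  by (simp_all add: poly_ext_iff algebra_simps)

lemma degree_shift [simp]: "degree (shift c p) = degree p"
  by (simp add: shift_def degree_pcompose)

lemma lead_coeff_shift [simp]: "lead_coeff (shift c p) = lead_coeff p"
  by (simp add: shift_def lead_coeff_comp)

lemma shift_eq_0_iff [simp]: "shift c p = 0 \<longleftrightarrow> p = 0"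
  by (metis degree_shift lead_coeff_shift leading_coeff_0_iff)

lemma poly_eq_0_if_roots_inj:
  fixes p :: "'a::idom poly"
  assumes "inj f" and "\<And>n::nat. poly p (f n) = 0"
  shows "p = 0"
proof (rule ccontr)
  assume "p \<noteq> 0"
  then have "finite {x. poly p x = 0}" by (rule poly_roots_finite)
  moreover have "range f \<subseteq> {x. poly p x = 0}" using assms(2) by auto
  ultimately show False
    using assms(1) finite_imageD finite_subset infinite_UNIV_nat by blast
qed

lemma poly_eq_0_if_nat_roots:
  fixes p :: "'a::{idom, ring_char_0} poly"
  assumes "\<And>n::nat. poly p (of_nat n) = 0"
  shows "p = 0"
  using poly_eq_0_if_roots_inj[of of_nat p] assms by (simp add: inj_of_nat)

lemma shift_periodic_imp_const:
  assumes h: "h \<noteq> 0" and periodic: "shift h p = p"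
  shows "p = [:poly p 0:]"
proof -
  have "poly p (of_nat k * h) = poly p 0" for k
  proof (induction k)
    case (Suc k)
    have "poly p (of_nat (Suc k) * h) = poly (shift h p) (of_nat (Suc k) * h)"
      using periodic by simp
    also have "\<dots> = poly p (of_nat k * h)" by (simp add: algebra_simps)
    finally show ?case using Suc by simp
  qed simp
  then have "p - [:poly p 0:] = 0"
    using h by (intro poly_eq_0_if_roots_inj[of "\<lambda>k. of_nat k * h"]) (auto simp: inj_def)
  then show ?thesis by simp
qed

lemma degree_diff_shift_le: "degree (p - shift c p) \<le> degree p - 1"
proof (cases "degree p = 0")
  case True
  then show ?thesis by (metis degree_eq_zeroE diff_self shift_const degree_0 zero_le)
next
  case False
  have "coeff (p - shift c p) (degree p) = 0"
    using lead_coeff_shift[of c p] by simp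
  moreover have "degree (p - shift c p) \<le> degree p"
    by (simp add: degree_diff_le)
  ultimately have "degree (p - shift c p) < degree p"
    using False by (metis leading_coeff_0_iff le_neq_implies_less degree_0 neq0_conv)
  then show ?thesis by simp
qed

lemma coeff_Suc_0_pcompose_linear:
  "coeff (pcompose p [:a, b:]) (Suc 0) = b * poly (pderiv p) (a :: 'a::idom)"
proof (induction p)
  case (pCons c p)
  have "[:a, b:] * s = smult a s + pCons 0 (smult b s)" for s :: "'a poly"
    by (simp add: mult_pCons_left)
  then show ?case
    using pCons.IH by (simp add: pcompose_pCons pderiv_pCons coeff_pcompose_0 algebra_simps)
qed simp

lemma coeff_mult_x:
  "coeff ([:0, 1:] * (p :: 'a::comm_semiring_1 poly)) k = (if k = 0 then 0 else coeff p (k - 1))"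
  by (cases k) (simp_all add: mult_pCons_left)

lemma of_nat_plus_half_neq_0: "(of_nat k + 1 / 2 :: complex) \<noteq> 0"
proof
  assume "(of_nat k + 1 / 2 :: complex) = 0"
  then have "Re (of_nat k + 1 / 2 :: complex) = 0" by simp
  then show False by simp
qed

lemma poly_eq_0_if_vanishes_on_progression:
  fixes f c :: "complex poly"
  assumes q: "q \<noteq> 0" and c: "c \<noteq> 0"
    and vanish: "\<And>n::nat. poly c (of_nat n) * poly f (r - of_nat n * q) = 0"
  shows "f = 0"
proof -
  have "c * pcompose f [:r, - q:] = 0"
    using vanish by (intro poly_eq_0_if_nat_roots) (simp add: poly_pcompose algebra_simps)
  then have "pcompose f [:r, - q:] = 0" using c by simp
  then have "poly (pcompose f [:r, - q:]) ((r - x) / q) = 0" for x by simp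
  then have "poly f x = 0" for x
    using q by (simp add: poly_pcompose field_simps)
  then show ?thesis by (simp add: poly_ext_iff)
qed

lemma min_degree_dvd:
  fixes I :: "'a::field poly set"
  assumes diff: "\<And>f g. f \<in> I \<Longrightarrow> g \<in> I \<Longrightarrow> f - g \<in> I"
    and mult: "\<And>f r. f \<in> I \<Longrightarrow> r * f \<in> I"
    and f0: "f0 \<in> I" "f0 \<noteq> 0" and minimal: "\<And>g. g \<in> I \<Longrightarrow> g \<noteq> 0 \<Longrightarrow> degree f0 \<le> degree g"
    and h: "h \<in> I"
  shows "f0 dvd h"
proof -
  have "h mod f0 \<in> I"
    using diff[OF h mult[OF f0(1), of "h div f0"]] by (simp add: minus_div_mult_eq_mod)
  then have "h mod f0 = 0"
    using minimal degree_mod_less[OF f0(2)] by (meson leD)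
  then show ?thesis by (simp add: mod_eq_0_iff_dvd)
qed

lemma linear_poly_eq: "degree (p :: 'a::zero poly) \<le> 1 \<Longrightarrow> p = [:coeff p 0, coeff p 1:]"
  by (rule poly_eqI) (auto simp: coeff_pCons coeff_eq_0 split: nat.split)

section \<open>The Witt equation\<close>

definition witt_eq :: "complex \<Rightarrow> (int \<Rightarrow> complex poly) \<Rightarrow> bool" where
  "witt_eq q p \<longleftrightarrow> (\<forall>m n. p m * shift (of_int m * q) (p n) - p n * shift (of_int n * q) (p m)
                             = smult (of_int n * q - of_int m * q) (p (m + n)))"

lemma witt_eqD:
  "witt_eq q p \<Longrightarrow> p m * shift (of_int m * q) (p n) - p n * shift (of_int n * q) (p m)
                    = smult (of_int n * q - of_int m * q) (p (m + n))"
  by (simp add: witt_eq_def)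

text \<open>For m \<noteq> 0, the product F = p m * shift (m q) (p (-m)) satisfies
  F(x) - F(x + m q) = -2 m q x, so F - x (x - m q) is periodic and hence constant.\<close>
lemma witt_eq_product:
  assumes q: "q \<noteq> 0" and witt: "witt_eq q p" and p0: "p 0 = [:0, 1:]" and m: "m \<noteq> 0"
  shows "\<exists>k. p m * shift (of_int m * q) (p (-m)) = [:k, - (of_int m * q), 1:]"
proof -
  define h where "h = of_int m * q"
  have h0: "h \<noteq> 0" using q m by (simp add: h_def)
  define F where "F = p m * shift h (p (-m))"
  have rel: "F - p (-m) * shift (-h) (p m) = smult (- h - h) [:0, 1:]"
    using witt_eqD[OF witt, of m "-m"] p0 by (simp add: F_def h_def)
  have shifted: "poly (p (-m) * shift (-h) (p m)) x = poly F (x + h)" for x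
    by (simp add: F_def)
  have "poly F x - poly (p (-m) * shift (-h) (p m)) x = - 2 * h * x" for x
    using arg_cong[OF rel, of "\<lambda>p. poly p x"] by simp
  then have F_step: "poly F x - poly F (x + h) = - 2 * h * x" for x
    by (simp only: shifted)
  define G where "G = F - [:0, -h, 1:]"
  have "shift (-h) G = G"
    using F_step by (simp add: poly_ext_iff G_def algebra_simps power2_eq_square)
  then have "G = [:poly G 0:]" using shift_periodic_imp_const[of "-h" G] h0 by simp
  then have "F = [:poly G 0, -h, 1:]"
    by (metis G_def add_pCons diff_add_cancel add_0_left pCons_0_0 add.right_neutral)
  then show ?thesis unfolding F_def h_def by blast
qed

lemma witt_eq_degree_one:
  assumes q: "q \<noteq> 0" and witt: "witt_eq q p" and p0: "p 0 = [:0, 1:]"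
  shows "degree (p m) = 1"
proof -
  have degree_sum: "p m \<noteq> 0 \<and> p (-m) \<noteq> 0 \<and> degree (p m) + degree (p (-m)) = 2"
    if m: "m \<noteq> 0" for m
  proof -
    obtain k where k: "p m * shift (of_int m * q) (p (-m)) = [:k, - (of_int m * q), 1:]"
      using witt_eq_product[OF q witt p0 m] by blast
    then have "p m \<noteq> 0" "p (-m) \<noteq> 0" by auto
    moreover have "degree (p m * shift (of_int m * q) (p (-m))) = 2" using k by simp
    ultimately show ?thesis by (simp add: degree_mult_eq)
  qed
  have nonconst: "degree (p (-m)) \<noteq> 0" if m: "m \<noteq> 0" for m
  proof
    assume "degree (p (-m)) = 0"
    then obtain c where c: "p (-m) = [:c:]" by (metis degree_eq_zeroE)
    from degree_sum[OF m] c have deg_m: "degree (p m) = 2" by simp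
    from degree_sum[of "2 * m"] m have "degree (p (2 * m)) \<le> 2" by simp
    then have "degree (p (2 * m) - shift (of_int (-m) * q) (p (2 * m))) \<le> 1"
      using degree_diff_shift_le[of "p (2 * m)" "of_int (-m) * q"] by linarith
    then have "degree (smult c (p (2 * m) - shift (of_int (-m) * q) (p (2 * m)))) \<le> 1"
      using degree_smult_le order.trans by blast
    moreover have "smult c (p (2 * m) - shift (of_int (-m) * q) (p (2 * m)))
        = smult (of_int (-m) * q - of_int (2 * m) * q) (p (2 * m + -m))"
      using witt_eqD[OF witt, of "2 * m" "-m"] c by (simp add: smult_diff_right)
    moreover have "degree (smult (of_int (-m) * q - of_int (2 * m) * q) (p (2 * m + -m))) = 2"
      using deg_m m q by simp
    ultimately have "(2::nat) \<le> 1" by metis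
    then show False by simp
  qed
  show ?thesis
  proof (cases "m = 0")
    case True
    then show ?thesis using p0 by simp
  next
    case False
    then show ?thesis
      using degree_sum[OF False] nonconst[OF False] nonconst[of "-m"] by simp
  qed
qed

lemma witt_eq_linear_coeffs:
  assumes q: "q \<noteq> 0" and witt: "witt_eq q p" and p_lin: "\<And>k. p k = [:e k, c k:]"
  shows "(of_int n - of_int m) * c (m + n) = (of_int n - of_int m) * (c m * c n)"
    and "(of_int n - of_int m) * e (m + n) = of_int n * c m * e n - of_int m * c n * e m"
proof -
  have rel: "[:e m, c m:] * shift (of_int m * q) [:e n, c n:]
        - [:e n, c n:] * shift (of_int n * q) [:e m, c m:]
      = smult (of_int n * q - of_int m * q) [:e (m + n), c (m + n):]"
    using witt_eqD[OF witt, of m n] by (simp only: p_lin)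
  from arg_cong[OF rel, of "\<lambda>p. coeff p 1"]
  have "q * ((of_int n - of_int m) * c (m + n)) = q * ((of_int n - of_int m) * (c m * c n))"
    by (simp add: algebra_simps)
  then show "(of_int n - of_int m) * c (m + n) = (of_int n - of_int m) * (c m * c n)"
    using q by simp
  from arg_cong[OF rel, of "\<lambda>p. coeff p 0"]
  have "q * ((of_int n - of_int m) * e (m + n)) = q * (of_int n * c m * e n - of_int m * c n * e m)"
    by (simp add: algebra_simps)
  then show "(of_int n - of_int m) * e (m + n) = of_int n * c m * e n - of_int m * c n * e m"
    using q by simp
qed

lemma eq_powi_if_mult_distinct:
  fixes c :: "int \<Rightarrow> complex"
  assumes mult: "\<And>m n. m \<noteq> n \<Longrightarrow> c (m + n) = c m * c n"
    and c0: "c 0 = 1" and nonzero: "\<And>m. c m \<noteq> 0"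
  shows "c m = c 1 powi m"
proof -
  define l where "l = c 1"
  have l0: "l \<noteq> 0" using nonzero l_def by simp
  have c2: "c 2 = l^2"
    using mult[of 2 1] mult[of 3 1] mult[of 4 1] mult[of 5 1] mult[of 2 4] nonzero[of 2] l0
    by (auto simp: l_def power2_eq_square power4_eq_xxxx algebra_simps)
  have pos: "c (int k) = l ^ k" for k
  proof (induction k)
    case (Suc k)
    show ?case
    proof (cases "k = 1")
      case True
      then show ?thesis using c2 by (simp add: numeral_2_eq_2)
    next
      case False
      then have "c (int k + 1) = c (int k) * l" using mult[of "int k" 1] l_def by simp
      then show ?thesis using Suc by (simp add: add.commute mult.commute)
    qed
  qed (simp add: c0)
  have neg: "c (- int k) = inverse (l ^ k)" for k
  proof (cases "k = 0")
    case False
    then have "1 = l ^ k * c (- int k)" using mult[of "int k" "- int k"] c0 pos by simp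
    then show ?thesis by (metis inverse_unique)
  qed (simp add: c0)
  show ?thesis
    using pos neg l_def by (cases m rule: int_cases2) (simp_all add: power_int_minus)
qed

lemma eq_linear_if_rec_distinct:
  fixes f :: "int \<Rightarrow> complex"
  assumes rec: "\<And>m n. m \<noteq> n \<Longrightarrow> (of_int n - of_int m) * f (m + n) = of_int n * f n - of_int m * f m"
    and f0: "f 0 = 0"
  shows "f m = of_int m * f 1"
proof -
  have neg: "f (- k) = - f k" for k
  proof (cases "k = 0")
    case False
    then have "of_int k * (f (- k) + f k) = 0"
      using rec[of k "- k"] f0 by (simp add: algebra_simps)
    then show ?thesis using False by (simp add: add_eq_0_iff)
  qed (simp add: f0)
  have step: "(of_int n - 1) * f (n + 1) = of_int n * f n - f 1" if "n \<noteq> 1" for n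
    using rec[of 1 n] that by (simp add: add.commute)
  have f3: "f 3 = 2 * f 2 - f 1" using step[of 2] by simp
  have "- 4 * f 2 = - f (-1) - 3 * f 3" using rec[of 3 "-1"] by simp
  then have f2: "f 2 = 2 * f 1" using f3 neg[of 1] by (simp add: algebra_simps)
  have pos: "f (int k) = of_nat k * f 1" for k
  proof (induction k rule: nat_less_induct)
    case (1 k)
    show ?case
    proof (cases "k \<le> 2")
      case True
      then have "k = 0 \<or> k = 1 \<or> k = 2" by auto
      then show ?thesis using f0 f2 by auto
    next
      case False
      then obtain j where j: "k = Suc j" "j \<ge> 2" by (metis Suc_le_D not_less_eq_eq)
      have "(of_nat j - 1) * f (int j + 1) = (of_nat j - 1) * (of_nat j + 1) * f 1"
        using step[of "int j"] 1 j by (simp add: algebra_simps)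
      moreover have "(of_nat j - 1 :: complex) \<noteq> 0" using j by simp
      ultimately show ?thesis using j by (simp add: add.commute)
    qed
  qed
  show ?thesis
    using pos neg by (cases m rule: int_cases2) simp_all
qed

theorem witt_eq_solution:
  assumes q: "q \<noteq> 0" and witt: "witt_eq q p" and p0: "p 0 = [:0, 1:]"
  obtains l \<alpha> where "l \<noteq> 0" and "\<And>m. p m = smult (l powi m) [:\<alpha> * of_int m, 1:]"
proof -
  define c where "c k = coeff (p k) 1" for k
  define e where "e k = coeff (p k) 0" for k
  have deg: "degree (p k) = 1" for k by (rule witt_eq_degree_one[OF q witt p0])
  then have p_lin: "p k = [:e k, c k:]" for k
    using linear_poly_eq[of "p k"] by (simp add: c_def e_def)
  have nonzero: "c k \<noteq> 0" for k
    using deg[of k] p_lin[of k] by auto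
  have c0: "c 0 = 1" and e0: "e 0 = 0" using p0 by (simp_all add: c_def e_def)
  note coeffs = witt_eq_linear_coeffs[OF q witt p_lin]
  have c_mult: "c (m + n) = c m * c n" if "m \<noteq> n" for m n
    using coeffs(1)[of n m] that by (simp add: add.commute)
  define l where "l = c 1"
  have c_powi: "c m = l powi m" for m
    unfolding l_def by (rule eq_powi_if_mult_distinct[OF c_mult c0 nonzero])
  define f where "f k = e k / c k" for k
  have f_rec: "(of_int n - of_int m) * f (m + n) = of_int n * f n - of_int m * f m"
    if "m \<noteq> n" for m n
    using coeffs(2)[of m n] c_mult[OF that] nonzero[of m] nonzero[of n]
    by (simp add: f_def field_simps)
  have f0: "f 0 = 0" unfolding f_def using e0 by simp
  have f_lin: "f m = of_int m * f 1" for m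
    by (rule eq_linear_if_rec_distinct[OF f_rec f0])
  show ?thesis
  proof
    show "l \<noteq> 0" using nonzero l_def by simp
    show "p m = smult (l powi m) [:f 1 * of_int m, 1:]" for m
      using p_lin[of m] c_powi[of m] f_lin[of m] nonzero[of m]
      by (simp add: f_def field_simps)
  qed
qed

lemma cvs_add_left: "cvs smul \<Longrightarrow> smul (c + d) x = smul c x + smul d x"
  and cvs_add_right: "cvs smul \<Longrightarrow> smul c (x + y) = smul c x + smul c y"
  and cvs_assoc: "cvs smul \<Longrightarrow> smul c (smul d x) = smul (c * d) x"
  and cvs_one: "cvs smul \<Longrightarrow> smul 1 x = x"
  by (simp_all add: cvs_def)

lemma cvs_zero_left: "cvs smul \<Longrightarrow> smul 0 x = 0"
  using cvs_add_left[of smul 0 0 x] by simp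

lemma cvs_zero_right: "cvs smul \<Longrightarrow> smul c 0 = 0"
  using cvs_add_right[of smul c 0 0] by simp

lemma cvs_sum: "cvs smul \<Longrightarrow> smul c (sum f S) = (\<Sum>k\<in>S. smul c (f k))"
  by (induction S rule: infinite_finite_induct) (simp_all add: cvs_zero_right cvs_add_right)

lemma cvs_minus_left: "cvs smul \<Longrightarrow> smul (- c) x = - smul c x"
  using cvs_add_left[of smul c "- c" x] cvs_zero_left[of smul x]
  by (simp add: eq_neg_iff_add_eq_0 add.commute)

lemma subspace_diff:
  assumes cvs: "cvs smul" and sub: "subspace_of smul W" and "x \<in> W" "y \<in> W"
  shows "x - y \<in> W"
proof -
  have "x + smul (-1) y \<in> W" using sub assms(3,4) by (simp add: subspace_of_def)
  then show ?thesis using cvs_minus_left[OF cvs, of 1 y] cvs_one[OF cvs] by simp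
qed

lemma clinear_map_add: "clinear_map smul smul' F \<Longrightarrow> F (x + y) = F x + F y"
  and clinear_map_smul: "clinear_map smul smul' F \<Longrightarrow> F (smul c x) = smul' c (F x)"
  by (simp_all add: clinear_map_def)

lemma clinear_map_zero: "clinear_map smul smul' F \<Longrightarrow> F 0 = 0"
  using clinear_map_add[of smul smul' F 0 0] by simp

lemma clinear_map_diff: "clinear_map smul smul' F \<Longrightarrow> F (x - y) = F x - F y"
  using clinear_map_add[of smul smul' F "x - y" y] by (simp add: algebra_simps)

lemma clinear_map_sum: "clinear_map smul smul' F \<Longrightarrow> F (sum f S) = (\<Sum>k\<in>S. F (f k))"
  by (induction S rule: infinite_finite_induct) (simp_all add: clinear_map_zero clinear_map_add)

lemma clinear_map_inv:
  assumes "bij \<phi>" and "clinear_map smul smul' \<phi>"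
  shows "clinear_map smul' smul (inv \<phi>)"
  using assms unfolding clinear_map_def
  by (metis bij_inv_eq_iff)

definition poly_apply ::
    "(complex \<Rightarrow> 'v \<Rightarrow> 'v) \<Rightarrow> ('v \<Rightarrow> 'v) \<Rightarrow> complex poly \<Rightarrow> 'v \<Rightarrow> 'v::ab_group_add" where
  "poly_apply smul T p w = (\<Sum>k\<le>degree p. smul (coeff p k) ((T ^^ k) w))"

lemma poly_apply_bound:
  assumes cvs: "cvs smul" and "degree p \<le> N"
  shows "poly_apply smul T p w = (\<Sum>k\<le>N. smul (coeff p k) ((T ^^ k) w))"
  unfolding poly_apply_def
  using assms by (intro sum.mono_neutral_left) (auto simp: coeff_eq_0 cvs_zero_left)

lemma poly_apply_0 [simp]: "cvs smul \<Longrightarrow> poly_apply smul T 0 w = 0"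
  and poly_apply_const [simp]: "poly_apply smul T [:a:] w = smul a w"
  by (simp_all add: poly_apply_def cvs_zero_left)

lemma poly_apply_add:
  assumes cvs: "cvs smul"
  shows "poly_apply smul T (p + r) w = poly_apply smul T p w + poly_apply smul T r w"
proof -
  define N where "N = max (degree p) (degree r)"
  have "degree (p + r) \<le> N" "degree p \<le> N" "degree r \<le> N"
    by (simp_all add: N_def degree_add_le)
  then show ?thesis
    by (simp add: poly_apply_bound[OF cvs] cvs_add_left[OF cvs] sum.distrib)
qed

lemma poly_apply_smult:
  "cvs smul \<Longrightarrow> poly_apply smul T (smult c p) w = smul c (poly_apply smul T p w)"
  by (simp add: poly_apply_bound[of _ _ "degree p"] degree_smult_le)
    (simp add: poly_apply_def cvs_sum cvs_assoc)

lemma poly_apply_diff: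
  assumes cvs: "cvs smul"
  shows "poly_apply smul T (p - r) w = poly_apply smul T p w - poly_apply smul T r w"
  using poly_apply_add[OF cvs, of T "p - r" r w] by simp

lemma poly_apply_pCons:
  assumes cvs: "cvs smul" and lin: "clinear_map smul smul T"
  shows "poly_apply smul T (pCons a p) w = smul a w + T (poly_apply smul T p w)"
proof -
  have "poly_apply smul T (pCons a p) w
      = (\<Sum>k\<le>Suc (degree p). smul (coeff (pCons a p) k) ((T ^^ k) w))"
    by (rule poly_apply_bound[OF cvs]) (simp add: degree_pCons_le)
  also have "\<dots> = smul a w + (\<Sum>k\<le>degree p. smul (coeff p k) ((T ^^ Suc k) w))"
    by (subst sum.atMost_Suc_shift) (simp del: funpow.simps sum.atMost_Suc)
  also have "(\<Sum>k\<le>degree p. smul (coeff p k) ((T ^^ Suc k) w)) = T (poly_apply smul T p w)"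
    by (simp add: poly_apply_def clinear_map_sum[OF lin] clinear_map_smul[OF lin])
  finally show ?thesis .
qed

lemma poly_apply_x:
  "cvs smul \<Longrightarrow> clinear_map smul smul T \<Longrightarrow> poly_apply smul T [:0, c:] w = smul c (T w)"
  by (simp add: poly_apply_pCons cvs_zero_left clinear_map_smul)

lemma poly_apply_mult:
  assumes cvs: "cvs smul" and lin: "clinear_map smul smul T"
  shows "poly_apply smul T (p * r) w = poly_apply smul T p (poly_apply smul T r w)"
proof (induction p)
  case (pCons a p)
  have "poly_apply smul T (pCons a p * r) w = poly_apply smul T (smult a r + pCons 0 (p * r)) w"
    by (simp add: mult_pCons_left)
  also have "\<dots> = smul a (poly_apply smul T r w) + T (poly_apply smul T (p * r) w)"
    by (simp add: poly_apply_add[OF cvs] poly_apply_smult[OF cvs] poly_apply_pCons[OF cvs lin]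
        cvs_zero_left[OF cvs])
  finally show ?case
    using pCons.IH by (simp add: poly_apply_pCons[OF cvs lin])
qed (simp add: cvs)

lemma poly_apply_commute_shift:
  assumes cvs: "cvs smul" and lin: "clinear_map smul smul T" and linF: "clinear_map smul smul F"
    and comm: "\<And>y. F (T y) = T (F y) - smul c (F y)"
  shows "F (poly_apply smul T p w) = poly_apply smul T (shift c p) (F w)"
proof (induction p)
  case (pCons a p)
  have sh: "shift c (pCons a p) = [:a:] + pCons 0 (shift c p) - smult c (shift c p)"
    by (simp add: poly_ext_iff algebra_simps)
  have "F (poly_apply smul T (pCons a p) w) = smul a (F w) + F (T (poly_apply smul T p w))"
    by (simp add: poly_apply_pCons[OF cvs lin] clinear_map_add[OF linF] clinear_map_smul[OF linF])
  also have "\<dots> = smul a (F w) + T (poly_apply smul T (shift c p) (F w))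
      - smul c (poly_apply smul T (shift c p) (F w))"
    using pCons.IH comm by simp
  also have "\<dots> = poly_apply smul T (shift c (pCons a p)) (F w)"
    unfolding sh
    by (simp add: poly_apply_add[OF cvs] poly_apply_diff[OF cvs] poly_apply_smult[OF cvs]
        poly_apply_pCons[OF cvs lin] cvs_zero_left[OF cvs])
  finally show ?case .
qed (simp add: cvs clinear_map_zero[OF linF])

lemma poly_apply_in_subspace:
  assumes sub: "subspace_of smul W" and "w \<in> W" and invariant: "\<And>x. x \<in> W \<Longrightarrow> T x \<in> W"
  shows "poly_apply smul T p w \<in> W"
proof -
  have "(T ^^ k) w \<in> W" for k by (induction k) (simp_all add: assms)
  then have "(\<Sum>k\<in>S. smul (coeff p k) ((T ^^ k) w)) \<in> W" for S :: "nat set"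
    using sub by (induction S rule: infinite_finite_induct) (simp_all add: subspace_of_def)
  then show ?thesis by (simp add: poly_apply_def)
qed

section \<open>R-modules of shifted polynomials\<close>

definition R_brackets ::
    "complex \<Rightarrow> (complex \<Rightarrow> 'v::ab_group_add \<Rightarrow> 'v) \<Rightarrow> (rb_basis \<Rightarrow> 'v \<Rightarrow> 'v) \<Rightarrow> bool" where
  "R_brackets q smul act \<longleftrightarrow>
     (\<forall>m i n j v. act (L m i) (act (L n j) v) - act (L n j) (act (L m i) v)
                    = smul (cLL q m i n j) (act (L (m + n) (i + j)) v)) \<and>
     (\<forall>m i l j v. act (L m i) (act (G l j) v) - act (G l j) (act (L m i) v)
                    = smul (cLG q m i l j) (act (G (m + l) (i + j)) v)) \<and>
     (\<forall>l i r j v. act (G l i) (act (G r j) v) + act (G r j) (act (G l i) v)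
                    = smul (2 * q) (act (L (l + r) (i + j)) v))"

lemma R_module_iff_brackets:
  "R_module q smul V0 V1 act \<longleftrightarrow>
     super_vs smul V0 V1 \<and> (\<forall>x. clinear_map smul smul (act x)) \<and>
     (\<forall>m i. act (L m i) ` V0 \<subseteq> V0 \<and> act (L m i) ` V1 \<subseteq> V1) \<and>
     (\<forall>m i. act (G m i) ` V0 \<subseteq> V1 \<and> act (G m i) ` V1 \<subseteq> V0) \<and>
     R_brackets q smul act"
  by (simp add: R_module_def R_brackets_def)

lemma R_brackets_transfer:
  assumes brackets: "R_brackets q smul act" and inj: "inj \<phi>"
    and lin: "clinear_map smul' smul \<phi>" and intertwines: "\<And>x w. \<phi> (act' x w) = act x (\<phi> w)"
  shows "R_brackets q smul' act'"
  using brackets unfolding R_brackets_def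
  by (simp add: inj_eq[OF inj, symmetric] clinear_map_add[OF lin] clinear_map_diff[OF lin]
      clinear_map_smul[OF lin] intertwines)

definition shift_act :: "complex \<Rightarrow> (int \<Rightarrow> nat \<Rightarrow> complex poly) \<Rightarrow> (int \<Rightarrow> nat \<Rightarrow> complex poly)
    \<Rightarrow> (int \<Rightarrow> nat \<Rightarrow> complex poly) \<Rightarrow> (int \<Rightarrow> nat \<Rightarrow> complex poly) \<Rightarrow> rb_basis \<Rightarrow> omega \<Rightarrow> omega" where
  "shift_act q P Q A B x v = (case x of
      L m i \<Rightarrow> (P m i * shift (of_int m * q) (fst v), Q m i * shift (of_int m * q) (snd v))
    | G m i \<Rightarrow> (B m i * shift (of_int m * q) (snd v), A m i * shift (of_int m * q) (fst v)))"

lemma shift_act_L [simp]: "shift_act q P Q A B (L m i) v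
    = (P m i * shift (of_int m * q) (fst v), Q m i * shift (of_int m * q) (snd v))"
  and shift_act_G [simp]: "shift_act q P Q A B (G m i) v
    = (B m i * shift (of_int m * q) (snd v), A m i * shift (of_int m * q) (fst v))"
  by (simp_all add: shift_act_def)

locale rb_shift_rep =
  fixes q :: complex and P Q A B :: "int \<Rightarrow> nat \<Rightarrow> complex poly"
  assumes LL_P: "P m i * shift (of_int m * q) (P n j) - P n j * shift (of_int n * q) (P m i)
                   = smult (cLL q m i n j) (P (m + n) (i + j))"
    and LL_Q: "Q m i * shift (of_int m * q) (Q n j) - Q n j * shift (of_int n * q) (Q m i)
                   = smult (cLL q m i n j) (Q (m + n) (i + j))"
    and LG_A: "Q m i * shift (of_int m * q) (A n j) - A n j * shift (of_int n * q) (P m i)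
                   = smult (cLG q m i n j) (A (m + n) (i + j))"
    and LG_B: "P m i * shift (of_int m * q) (B n j) - B n j * shift (of_int n * q) (Q m i)
                   = smult (cLG q m i n j) (B (m + n) (i + j))"
    and GG_P: "B m i * shift (of_int m * q) (A n j) + B n j * shift (of_int n * q) (A m i)
                   = smult (2 * q) (P (m + n) (i + j))"
    and GG_Q: "A m i * shift (of_int m * q) (B n j) + A n j * shift (of_int n * q) (B m i)
                   = smult (2 * q) (Q (m + n) (i + j))"

lemma mult_shift_mult_shift:
  "X * shift (of_int m * q) (Y * shift (of_int n * q) f)
     = (X * shift (of_int m * q) Y) * shift (of_int (m + n) * q) f"
  by (simp add: shift_mult shift_shift algebra_simps)

lemma R_brackets_shift_act_iff:
  "R_brackets q Omega_smul (shift_act q P Q A B) \<longleftrightarrow> rb_shift_rep q P Q A B"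
proof
  assume brackets: "R_brackets q Omega_smul (shift_act q P Q A B)"
  let ?act = "shift_act q P Q A B"
  have LL: "?act (L m i) (?act (L n j) w) - ?act (L n j) (?act (L m i) w)
      = Omega_smul (cLL q m i n j) (?act (L (m + n) (i + j)) w)"
    and LG: "?act (L m i) (?act (G n j) w) - ?act (G n j) (?act (L m i) w)
      = Omega_smul (cLG q m i n j) (?act (G (m + n) (i + j)) w)"
    and GG: "?act (G m i) (?act (G n j) w) + ?act (G n j) (?act (G m i) w)
      = Omega_smul (2 * q) (?act (L (m + n) (i + j)) w)" for m i n j w
    using brackets unfolding R_brackets_def by blast+
  show "rb_shift_rep q P Q A B"
    using LL[where w = "(1, 0)"] LL[where w = "(0, 1)"] LG[where w = "(1, 0)"]
      LG[where w = "(0, 1)"] GG[where w = "(1, 0)"] GG[where w = "(0, 1)"]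
    by unfold_locales (simp_all add: Omega_smul_def)
next
  assume "rb_shift_rep q P Q A B"
  then interpret rb_shift_rep q P Q A B .
  have sum_shift: "of_int n * q + of_int m * q = of_int (m + n) * q" for m n :: int
    by (simp add: algebra_simps)
  show "R_brackets q Omega_smul (shift_act q P Q A B)"
    unfolding R_brackets_def
    by (simp add: prod_eq_iff Omega_smul_def mult_shift_mult_shift sum_shift
        add.commute[of n m for n m :: int] left_diff_distrib[symmetric] distrib_right[symmetric]
        LL_P LL_Q LG_A LG_B GG_P GG_Q)
qed

lemma cvs_Omega: "cvs Omega_smul"
  by (simp add: cvs_def Omega_smul_def smult_add_right smult_add_left)

lemma super_vs_Omega: "super_vs Omega_smul Omega_even Omega_odd"
  unfolding super_vs_def
proof (intro conjI allI)
  show "subspace_of Omega_smul Omega_even" "subspace_of Omega_smul Omega_odd"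
    by (simp_all add: subspace_of_def Omega_even_def Omega_odd_def Omega_smul_def)
  show "Omega_even \<inter> Omega_odd = {0}"
    by (auto simp: Omega_even_def Omega_odd_def prod_eq_iff)
  show "\<exists>x0\<in>Omega_even. \<exists>x1\<in>Omega_odd. x = x0 + x1" for x :: omega
    by (intro bexI[of _ "(fst x, 0)"] bexI[of _ "(0, snd x)"])
      (auto simp: Omega_even_def Omega_odd_def prod_eq_iff)
qed (rule cvs_Omega)

lemma R_module_shift_act_iff:
  "R_module q Omega_smul Omega_even Omega_odd (shift_act q P Q A B) \<longleftrightarrow> rb_shift_rep q P Q A B"
proof -
  have "clinear_map Omega_smul Omega_smul (shift_act q P Q A B x)" for x
    by (cases x) (simp_all add: clinear_map_def Omega_smul_def shift_add shift_smult algebra_simps)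
  moreover have "shift_act q P Q A B (L m i) ` Omega_even \<subseteq> Omega_even"
    "shift_act q P Q A B (L m i) ` Omega_odd \<subseteq> Omega_odd"
    "shift_act q P Q A B (G m i) ` Omega_even \<subseteq> Omega_odd"
    "shift_act q P Q A B (G m i) ` Omega_odd \<subseteq> Omega_even" for m i
    by (auto simp: Omega_even_def Omega_odd_def)
  ultimately show ?thesis
    by (simp add: R_module_iff_brackets super_vs_Omega R_brackets_shift_act_iff)
qed

definition Omega_P :: "complex \<Rightarrow> complex \<Rightarrow> complex \<Rightarrow> complex \<Rightarrow> int \<Rightarrow> nat \<Rightarrow> complex poly" where
  "Omega_P q lam a b m i = smult (lam powi m)
     (smult (kd (i = 0)) [:- (of_int m * q * a), 1:] + [: kd (q = -1) * kd (i = 1) * b :])"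

definition Omega_Q :: "complex \<Rightarrow> complex \<Rightarrow> complex \<Rightarrow> complex \<Rightarrow> int \<Rightarrow> nat \<Rightarrow> complex poly" where
  "Omega_Q q lam a b m i = smult (lam powi m)
     (smult (kd (i = 0)) [:- (of_int m * q * a) - of_int m * q / 2, 1:]
        + [: kd (q = -1) * kd (i = 1) * b :])"

definition Omega_A :: "complex \<Rightarrow> complex \<Rightarrow> complex \<Rightarrow> complex \<Rightarrow> int \<Rightarrow> nat \<Rightarrow> complex poly" where
  "Omega_A q lam a b m i = [: lam powi m * kd (i = 0) :]"

definition Omega_B :: "complex \<Rightarrow> complex \<Rightarrow> complex \<Rightarrow> complex \<Rightarrow> int \<Rightarrow> nat \<Rightarrow> complex poly" where
  "Omega_B q lam a b m i = smult (q * lam powi m)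
     (smult (kd (i = 0)) [:- (2 * of_int m * q * a), 1:] + [: 2 * kd (q = -1) * kd (i = 1) * b :])"

lemmas Omega_coeffs_defs = Omega_P_def Omega_Q_def Omega_A_def Omega_B_def

lemma Omega_act_eq_shift_act:
  "Omega_act q lam a b
     = shift_act q (Omega_P q lam a b) (Omega_Q q lam a b) (Omega_A q lam a b) (Omega_B q lam a b)"
  by (intro ext, simp add: Omega_act_def shift_act_def Omega_coeffs_defs split: rb_basis.split)

lemma rb_shift_rep_Omega:
  assumes "lam \<noteq> 0" and "q \<noteq> -1 \<longrightarrow> b = 0"
  shows "rb_shift_rep q
           (Omega_P q lam a b) (Omega_Q q lam a b) (Omega_A q lam a b) (Omega_B q lam a b)"
  using assms
  by unfold_locales
    (auto simp: poly_ext_iff Omega_coeffs_defs cLL_def cLG_def kd_def power_int_add field_simps)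

section \<open>Classification of shift modules\<close>

locale rb_normal_shift_rep = rb_shift_rep +
  assumes q_nonzero: "q \<noteq> 0"
    and P00: "P 0 0 = [:0, 1:]" and Q00: "Q 0 0 = [:0, 1:]"
    and A00: "A 0 0 = 1" and B00: "B 0 0 = [:0, q:]"
begin

lemma level0_Q_minus_P: "Q m 0 - P m 0 = smult (- (of_int m * q / 2)) (A m 0)"
  using LG_A[of m 0 0 0] A00 by (simp add: cLG_def)

lemma level0_A_eq:
  assumes "m \<noteq> 0"
  shows "A m 0 = smult (- 2 / (of_int m * q)) (Q m 0 - P m 0)"
proof -
  have "smult (- 2 / (of_int m * q)) (Q m 0 - P m 0)
      = smult (- 2 / (of_int m * q) * - (of_int m * q / 2)) (A m 0)"
    using level0_Q_minus_P[of m] by simp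
  also have "- 2 / (of_int m * q) * - (of_int m * q / 2) = 1"
    using assms q_nonzero by (simp add: field_simps)
  finally show ?thesis by simp
qed

text \<open>Both L-families at level 0 solve the Witt equation; comparing the quadratic
  coefficients of the bracket of L_{1,0} and G_{1,0} shows that they have the same scale.\<close>
lemma level0_L_forms:
  obtains l \<alpha> \<beta> where "l \<noteq> 0"
    and "\<And>m. P m 0 = smult (l powi m) [:\<alpha> * of_int m, 1:]"
    and "\<And>m. Q m 0 = smult (l powi m) [:\<beta> * of_int m, 1:]"
proof -
  have "witt_eq q (\<lambda>m. P m 0)" "witt_eq q (\<lambda>m. Q m 0)"
    using LL_P[of _ 0 _ 0] LL_Q[of _ 0 _ 0] by (simp_all add: witt_eq_def cLL_def)
  then obtain l \<alpha> u \<beta> where l: "l \<noteq> 0"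
    and P_form: "\<And>m. P m 0 = smult (l powi m) [:\<alpha> * of_int m, 1:]"
    and Q_form: "\<And>m. Q m 0 = smult (u powi m) [:\<beta> * of_int m, 1:]"
    using witt_eq_solution q_nonzero P00 Q00 by metis
  have "Q 1 0 * shift q (A 1 0) - A 1 0 * shift q (P 1 0) = smult (q / 2) (A 2 0)"
    using LG_A[of 1 0 1 0] by (simp add: cLG_def)
  from arg_cong[OF this, of "\<lambda>p. coeff p 2"]
  have "l * (q * (u * 4)) = l * (l * (q * 2)) + q * (u * (u * 2))"
    using level0_A_eq[of 1] level0_A_eq[of 2] P_form[of 1] Q_form[of 1] P_form[of 2] Q_form[of 2]
      q_nonzero
    by (simp add: numeral_2_eq_2 field_simps)
  then have "q * ((u - l) * (u - l)) = 0" by algebra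
  then have "u = l" using q_nonzero by simp
  with l P_form Q_form show ?thesis using that by blast
qed

text \<open>The G-families are then determined by the relations with L_{0,0} and G_{0,0}; the
  remaining constant \<kappa> = 2 (\<alpha> - \<beta>) / q solves \<kappa> (1 - \<kappa>) = 0 and \<kappa>^2 + 2 \<kappa> - 3 = 0,
  obtained by evaluating two L-G brackets at 0.\<close>
lemma level0_forms:
  obtains l \<alpha> where "l \<noteq> 0"
    and "\<And>m. P m 0 = smult (l powi m) [:\<alpha> * of_int m, 1:]"
    and "\<And>m. Q m 0 = smult (l powi m) [:\<alpha> * of_int m - of_int m * q / 2, 1:]"
    and "\<And>m. A m 0 = [:l powi m:]"
    and "\<And>m. B m 0 = smult (q * l powi m) [:2 * \<alpha> * of_int m, 1:]"
proof -
  obtain l \<alpha> \<beta> where l: "l \<noteq> 0"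
    and P_form: "\<And>m. P m 0 = smult (l powi m) [:\<alpha> * of_int m, 1:]"
    and Q_form: "\<And>m. Q m 0 = smult (l powi m) [:\<beta> * of_int m, 1:]"
    using level0_L_forms by blast
  define \<kappa> where "\<kappa> = 2 * (\<alpha> - \<beta>) / q"
  have \<beta>_eq: "\<beta> = \<alpha> - q * \<kappa> / 2" using q_nonzero by (simp add: \<kappa>_def field_simps)
  have A_const: "A m 0 = [:l powi m * \<kappa>:]" if "m \<noteq> 0" for m
    using level0_A_eq[OF that] P_form[of m] Q_form[of m] that q_nonzero
    by (simp add: \<kappa>_def field_simps)
  have "poly (Q 1 0 * shift q (A 1 0) - A 1 0 * shift q (P 1 0)) 0 = poly (smult (q / 2) (A 2 0)) 0"
    using LG_A[of 1 0 1 0] by (simp add: cLG_def)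
  then have "l * l * q * (\<kappa> * (1 - \<kappa>)) = 0"
    using A_const[of 1] A_const[of 2] P_form[of 1] Q_form[of 1] \<beta>_eq
    by (simp add: algebra_simps power2_eq_square)
  then have \<kappa>1: "\<kappa> * (1 - \<kappa>) = 0" using q_nonzero l by simp
  have "poly (Q 1 0 * shift q (A (-1) 0) - A (-1) 0 * shift (- q) (P 1 0)) 0
      = poly (smult (- (3 * q / 2)) (A 0 0)) 0"
    using LG_A[of 1 0 "-1" 0] by (simp add: cLG_def)
  then have "l * l * q * (2 * \<kappa> * \<kappa> + 4 * \<kappa> - 6) = 0"
    using A_const[of "-1"] P_form[of 1] Q_form[of 1] A00 \<beta>_eq l
    by (simp add: power_int_minus field_simps)
  then have "2 * \<kappa> * \<kappa> + 4 * \<kappa> - 6 = 0" using q_nonzero l by (metis mult_eq_0_iff)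
  with \<kappa>1 have "\<kappa> = 1" by auto
  then have A_form: "A m 0 = [:l powi m:]" for m
    using A_const[of m] A00 by (cases "m = 0") auto
  have B_form: "B m 0 = smult (q * l powi m) [:2 * \<alpha> * of_int m, 1:]" for m
  proof -
    have "B m 0 = smult (2 * q) (P m 0) - [:0, q:] * A m 0"
      using GG_P[of m 0 0 0] A00 B00 by (simp add: algebra_simps)
    then show ?thesis using P_form[of m] A_form[of m] by (simp add: algebra_simps)
  qed
  show ?thesis
  proof (rule that[OF l P_form _ A_form B_form])
    show "Q m 0 = smult (l powi m) [:\<alpha> * of_int m - of_int m * q / 2, 1:]" for m
      using Q_form[of m] \<beta>_eq \<open>\<kappa> = 1\<close> by (simp add: algebra_simps)
  qed
qed

end

context rb_shift_rep
begin

definition level_vanishes :: "nat \<Rightarrow> bool" where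
  "level_vanishes i \<longleftrightarrow> (\<forall>m. P m i = 0 \<and> Q m i = 0 \<and> A m i = 0 \<and> B m i = 0)"

text \<open>At the resonance q = -i one writes level i as the sum of levels 1 and i - 1 and
  chooses indices with a nonzero structure constant.\<close>
lemma level_res_vanishes:
  assumes i: "i \<ge> 2" and res: "q = - of_nat i"
    and vanish: "level_vanishes 1" "level_vanishes (i - 1)"
  shows "level_vanishes i"
  unfolding level_vanishes_def
proof
  fix k
  have split: "1 + (i - 1) = i" using i by simp
  have i_nonzero: "(of_nat i :: complex) \<noteq> 0" using i by simp
  obtain m n where mn: "m + n = k" and LL_nonzero: "cLL q m 1 n (i - 1) \<noteq> 0"
  proof (cases "k = 0")
    case True
    have "cLL q 1 1 (-1) (i - 1) = of_nat i"
      using res i by (simp add: cLL_def of_nat_diff algebra_simps)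
    then show ?thesis using that[of 1 "-1"] True i_nonzero by simp
  next
    case False
    have "cLL q k 1 0 (i - 1) = of_int k"
      using res i by (simp add: cLL_def of_nat_diff algebra_simps)
    then show ?thesis using that[of k 0] False by simp
  qed
  obtain m' n' where mn': "m' + n' = k" and LG_nonzero: "cLG q m' 1 n' (i - 1) \<noteq> 0"
  proof (cases "k = 0")
    case True
    have "cLG q 1 1 (-1) (i - 1) = of_nat i / 2"
      using res i by (simp add: cLG_def of_nat_diff field_simps)
    then have "cLG q 1 1 (-1) (i - 1) \<noteq> 0"
      using i_nonzero by (metis divide_eq_0_iff zero_neq_numeral)
    then show ?thesis using that[of 1 "-1"] True by simp
  next
    case False
    have "cLG q 0 1 k (i - 1) = of_int k * (1 - of_nat i)"
      using res i by (simp add: cLG_def of_nat_diff algebra_simps)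
    moreover have "(1 - of_nat i :: complex) \<noteq> 0" using i by simp
    ultimately show ?thesis using that[of 0 k] False by simp
  qed
  show "P k i = 0 \<and> Q k i = 0 \<and> A k i = 0 \<and> B k i = 0"
    using LL_P[of m 1 n "i - 1"] LL_Q[of m 1 n "i - 1"]
      LG_A[of m' 1 n' "i - 1"] LG_B[of m' 1 n' "i - 1"]
      vanish mn mn' split LL_nonzero LG_nonzero
    by (simp add: level_vanishes_def)
qed

end

locale rb_level0 = rb_shift_rep +
  fixes l \<alpha> :: complex
  assumes q_nonzero: "q \<noteq> 0" and l_nonzero: "l \<noteq> 0"
    and P_level0: "P m 0 = smult (l powi m) [:\<alpha> * of_int m, 1:]"
    and Q_level0: "Q m 0 = smult (l powi m) [:\<alpha> * of_int m - of_int m * q / 2, 1:]"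
    and A_level0: "A m 0 = [:l powi m:]"
    and B_level0: "B m 0 = smult (q * l powi m) [:2 * \<alpha> * of_int m, 1:]"
begin

lemma Q_eq: "Q m i = P m i - smult (of_int m * q / 2) (A m i)"
  using LG_A[of m i 0 0] A_level0[of 0] by (simp add: cLG_def algebra_simps)

lemma B_eq: "B m i = smult (2 * q) (P m i) - [:0, q:] * A m i"
  using GG_P[of m i 0 0] A_level0[of 0] B_level0[of 0] by (simp add: algebra_simps)

lemma bracket_L0i_Gn0:
  "l powi n * (poly (P 0 i) x - poly (P 0 i) (x - of_int n * q))
     = of_int n * (of_nat i + q) * poly (A n i) x"
  using arg_cong[OF LG_A[of 0 i n 0], of "\<lambda>p. poly p x"] Q_eq[of 0 i] A_level0[of n]
  by (simp add: cLG_def algebra_simps)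

lemma bracket_L0i_Ln0:
  "l powi n * (x + \<alpha> * of_int n) * (poly (P 0 i) x - poly (P 0 i) (x - of_int n * q))
     = of_int n * (of_nat i + q) * poly (P n i) x"
  using arg_cong[OF LL_P[of 0 i n 0], of "\<lambda>p. poly p x"] P_level0[of n]
  by (simp add: cLL_def algebra_simps)

lemma bracket_Ln0_G0i:
  "l powi n * (x + \<alpha> * of_int n - of_int n * q / 2) * poly (A 0 i) (x - of_int n * q)
       - poly (A 0 i) x * (l powi n * (x + \<alpha> * of_int n))
     = - (of_int n * (of_nat i + q / 2)) * poly (A n i) x"
  using arg_cong[OF LG_A[of n 0 0 i], of "\<lambda>p. poly p x"] P_level0[of n] Q_level0[of n]
  by (simp add: cLG_def algebra_simps)

lemma bracket_G0i_Gn0: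
  "(2 * q * poly (P 0 i) x - q * x * poly (A 0 i) x) * l powi n
       + q * l powi n * (x + 2 * \<alpha> * of_int n) * poly (A 0 i) (x - of_int n * q)
     = 2 * q * poly (P n i) x"
  using arg_cong[OF GG_P[of 0 i n 0], of "\<lambda>p. poly p x"] A_level0[of n] B_level0[of n] B_eq[of 0 i]
  by (simp add: algebra_simps)

lemma level_identity_P:
  "of_int n * (of_nat i + q) * (2 * poly (P 0 i) x - x * poly (A 0 i) x
       + (x + 2 * \<alpha> * of_int n) * poly (A 0 i) (x - of_int n * q))
     = 2 * (x + \<alpha> * of_int n) * (poly (P 0 i) x - poly (P 0 i) (x - of_int n * q))"
proof -
  have "q * l powi n * (of_int n * (of_nat i + q) * (2 * poly (P 0 i) x - x * poly (A 0 i) x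
       + (x + 2 * \<alpha> * of_int n) * poly (A 0 i) (x - of_int n * q))
     - 2 * (x + \<alpha> * of_int n) * (poly (P 0 i) x - poly (P 0 i) (x - of_int n * q))) = 0"
    using bracket_L0i_Ln0[where n = n and x = x and i = i]
      bracket_G0i_Gn0[where n = n and x = x and i = i]
    by algebra
  then show ?thesis using q_nonzero l_nonzero by simp
qed

lemma level_identity_A:
  "(of_nat i + q) * ((x + \<alpha> * of_int n - of_int n * q / 2) * poly (A 0 i) (x - of_int n * q)
       - (x + \<alpha> * of_int n) * poly (A 0 i) x)
     + (of_nat i + q / 2) * (poly (P 0 i) x - poly (P 0 i) (x - of_int n * q)) = 0"
proof -
  have "l powi n * ((of_nat i + q) * ((x + \<alpha> * of_int n - of_int n * q / 2)
         * poly (A 0 i) (x - of_int n * q) - (x + \<alpha> * of_int n) * poly (A 0 i) x)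
     + (of_nat i + q / 2) * (poly (P 0 i) x - poly (P 0 i) (x - of_int n * q))) = 0"
    using bracket_L0i_Gn0[where n = n and x = x and i = i]
      bracket_Ln0_G0i[where n = n and x = x and i = i]
    by algebra
  then show ?thesis using l_nonzero by simp
qed

text \<open>The identities above hold for every integer n, so as polynomial identities in n they
  can be differentiated at n = 0; this yields Euler-type differential equations for P 0 i and
  A 0 i, read off coefficientwise.\<close>
lemma level_Euler_P: "(of_nat i + q - q * of_nat k) * coeff (P 0 i) k = 0"
proof -
  let ?R = "P 0 i" and ?S = "A 0 i"
  have "(of_nat i + q) * poly ?R x = q * x * poly (pderiv ?R) x" for x
  proof -
    define JY where "JY = smult (of_nat i + q) ([:0, 1:] * ([:2 * poly ?R x - x * poly ?S x:]
        + [:x, 2 * \<alpha>:] * pcompose ?S [:x, - q:]))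
      - smult 2 ([:x, \<alpha>:] * ([:poly ?R x:] - pcompose ?R [:x, - q:]))"
    have "poly JY (of_nat n) = 0" for n
      using level_identity_P[where i = i and n = "int n" and x = x] unfolding JY_def
      by (simp add: poly_pcompose algebra_simps)
    then have "JY = 0" by (rule poly_eq_0_if_nat_roots)
    then have "coeff JY 1 = 0" by simp
    then have "2 * ((of_nat i + q) * poly ?R x) = 2 * (q * x * poly (pderiv ?R) x)" unfolding JY_def
      by (simp add: coeff_mult_x mult_pCons_left coeff_Suc_0_pcompose_linear coeff_pcompose_0
          algebra_simps)
    then show ?thesis by simp
  qed
  then have "smult (of_nat i + q) ?R - smult q ([:0, 1:] * pderiv ?R) = 0"
    by (simp add: poly_ext_iff algebra_simps)
  from arg_cong[OF this, of "\<lambda>p. coeff p k"] show ?thesis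
    by (cases k) (simp_all add: coeff_mult_x coeff_pderiv algebra_simps)
qed

lemma level_Euler_A:
  "(of_nat i + q) * (of_nat k + 1 / 2) * coeff (A 0 i) k
     = (of_nat i + q / 2) * of_nat (Suc k) * coeff (P 0 i) (Suc k)"
proof -
  let ?R = "P 0 i" and ?S = "A 0 i"
  have "(of_nat i + q) * (x * poly (pderiv ?S) x + poly ?S x / 2)
      = (of_nat i + q / 2) * poly (pderiv ?R) x" for x
  proof -
    define KY where "KY = smult (of_nat i + q)
        ([:x, \<alpha> - q / 2:] * pcompose ?S [:x, - q:] - [:x, \<alpha>:] * [:poly ?S x:])
       + smult (of_nat i + q / 2) ([:poly ?R x:] - pcompose ?R [:x, - q:])"
    have "poly KY (of_nat n) = 0" for n
      using level_identity_A[where i = i and n = "int n" and x = x] unfolding KY_def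
      by (simp add: poly_pcompose algebra_simps)
    then have "KY = 0" by (rule poly_eq_0_if_nat_roots)
    then have "coeff KY 1 = 0" by simp
    then have "q * ((of_nat i + q) * (x * poly (pderiv ?S) x + poly ?S x / 2))
        = q * ((of_nat i + q / 2) * poly (pderiv ?R) x)" unfolding KY_def
      by (simp add: mult_pCons_left coeff_Suc_0_pcompose_linear coeff_pcompose_0 algebra_simps)
    then show ?thesis using q_nonzero by simp
  qed
  then have "smult (of_nat i + q) ([:0, 1:] * pderiv ?S) + smult ((of_nat i + q) / 2) ?S
      - smult (of_nat i + q / 2) (pderiv ?R) = 0"
    by (simp add: poly_ext_iff algebra_simps)
  from arg_cong[OF this, of "\<lambda>p. coeff p k"] show ?thesis
    by (cases k) (simp_all add: coeff_mult_x coeff_pderiv field_simps)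
qed

lemma level_P0_monomial:
  assumes i: "i \<ge> 1" and nonres: "of_nat i + q \<noteq> 0" and nonzero: "P 0 i \<noteq> 0"
  obtains c d where "c \<noteq> 0" and "d \<ge> 2" and "of_nat i + q = q * of_nat d"
    and "P 0 i = monom c d" and "A 0 i = monom c (d - 1)"
proof -
  define d where "d = degree (P 0 i)"
  define c where "c = lead_coeff (P 0 i)"
  have c: "c \<noteq> 0" using nonzero c_def by simp
  have iq: "of_nat i + q = q * of_nat d" using level_Euler_P[of i d] c by (simp add: c_def d_def)
  have "d \<noteq> 0" using iq nonres by auto
  moreover have "d \<noteq> 1" using iq i by auto
  ultimately have d: "d \<ge> 2" by simp
  have P_monom: "P 0 i = monom c d"
  proof (rule poly_eqI)
    fix k
    show "coeff (P 0 i) k = coeff (monom c d) k"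
    proof (cases "k = d")
      case False
      then have "of_nat i + q - q * of_nat k \<noteq> 0" using iq q_nonzero by (simp add: algebra_simps)
      then show ?thesis using level_Euler_P[of i k] False by simp
    qed (simp add: c_def d_def)
  qed
  have A_monom: "A 0 i = monom c (d - 1)"
  proof (rule poly_eqI)
    fix k
    note half = of_nat_plus_half_neq_0[of k]
    have "(of_nat i + q) * (of_nat k + 1 / 2) * coeff (A 0 i) k
        = (of_nat i + q) * (of_nat k + 1 / 2) * coeff (monom c (d - 1)) k"
    proof (cases "Suc k = d")
      case True
      then have "of_nat i = q * of_nat k" using iq True[symmetric] by (simp add: algebra_simps)
      then show ?thesis
        using level_Euler_A[of i k] True[symmetric] P_monom by (simp add: field_simps)
    next
      case False
      then show ?thesis using level_Euler_A[of i k] P_monom d by auto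
    qed
    then show "coeff (A 0 i) k = coeff (monom c (d - 1)) k" using nonres half by simp
  qed
  show ?thesis by (rule that[OF c d iq P_monom A_monom])
qed

lemma level_P0_reflection:
  assumes nonres: "of_nat i + q \<noteq> 0" and \<alpha>: "\<alpha> = 0"
    and P_0: "poly (P 0 i) 0 = 0" and A_0: "poly (A 0 i) 0 = 0"
  shows "poly (P 0 i) (- q) = 2 * poly (P 0 i) q"
proof -
  have "poly (Q 1 i) 0 * inverse l - inverse l * poly (P 1 i) q = cLG q 1 i (-1) 0 * poly (A 0 i) 0"
    using arg_cong[OF LG_A[of 1 i "-1" 0], of "\<lambda>p. poly p 0"] A_level0[of "-1"]
    by (simp add: power_int_minus mult.commute)
  then have "inverse l * (poly (Q 1 i) 0 - poly (P 1 i) q) = 0"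
    using A_0 by (simp add: algebra_simps)
  then have Q_0: "poly (Q 1 i) 0 = poly (P 1 i) q" using l_nonzero by simp
  have "(of_nat i + q) * poly (P 1 i) 0 = 0"
    using bracket_L0i_Ln0[where n = 1 and x = 0 and i = i] \<alpha> by simp
  then have "poly (P 1 i) q = - (q / 2 * poly (A 1 i) 0)"
    using Q_0 Q_eq[of 1 i] nonres by simp
  moreover have "l * q * (poly (P 0 i) q - poly (P 0 i) 0) = (of_nat i + q) * poly (P 1 i) q"
    using bracket_L0i_Ln0[where n = 1 and x = q and i = i] \<alpha> by simp
  moreover have "l * (poly (P 0 i) 0 - poly (P 0 i) (- q)) = (of_nat i + q) * poly (A 1 i) 0"
    using bracket_L0i_Gn0[where n = 1 and x = 0 and i = i] by simp
  ultimately have "l * q * (poly (P 0 i) (- q) - 2 * poly (P 0 i) q) = 0"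
    using P_0 by algebra
  then show ?thesis using l_nonzero q_nonzero by simp
qed

text \<open>A nonzero P 0 i would be a monomial c x^d with d \<ge> 2; then \<alpha> = 0, and
  level_P0_reflection gives (-1)^d = 2.\<close>
lemma level_nonres_P0_zero:
  assumes i: "i \<ge> 1" and nonres: "of_nat i + q \<noteq> 0"
  shows "P 0 i = 0"
proof (rule ccontr)
  assume "P 0 i \<noteq> 0"
  then obtain c d where c: "c \<noteq> 0" and d: "d \<ge> 2" and iq: "of_nat i + q = q * of_nat d"
    and P_monom: "P 0 i = monom c d" and A_monom: "A 0 i = monom c (d - 1)"
    using level_P0_monomial[OF i nonres] by blast
  have P_val: "poly (P 0 i) z = c * z ^ d" and A_val: "poly (A 0 i) z = c * z ^ (d - 1)" for z
    using P_monom A_monom by (simp_all add: poly_monom)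
  define w where "w = c * (- q) ^ (d - 1)"
  have w: "w \<noteq> 0" using c q_nonzero w_def by simp
  have P_mq: "poly (P 0 i) (- q) = w * (- q)"
    using P_val[of "- q"] d w_def by (metis Suc_diff_1 less_le_trans mult.assoc mult.commute
        pos2 power_Suc)
  have A_mq: "poly (A 0 i) (- q) = w" using A_val w_def by simp
  have P_0: "poly (P 0 i) 0 = 0" and A_0: "poly (A 0 i) 0 = 0" using P_val A_val d by simp_all
  have "(of_nat i + q) * (2 * \<alpha> * w) = 2 * \<alpha> * (0 - w * (- q))"
    using level_identity_P[where n = 1 and x = 0 and i = i] P_0 P_mq A_mq by simp
  then have "2 * \<alpha> * w * of_nat i = 0" by (simp add: algebra_simps)
  then have "\<alpha> = 0" using w i by simp
  then have "poly (P 0 i) (- q) = 2 * poly (P 0 i) q"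
    using level_P0_reflection[OF nonres _ P_0 A_0] by simp
  then have "c * ((- 1) ^ d * q ^ d) = 2 * (c * q ^ d)"
    using P_val by (simp add: power_mult_distrib[symmetric])
  then have "(- 1 :: complex) ^ d = 2" using c q_nonzero by simp
  then show False by (cases "even d") simp_all
qed

lemma level_nonres_vanishes:
  assumes i: "i \<ge> 1" and nonres: "of_nat i + q \<noteq> 0"
  shows "level_vanishes i"
proof -
  have P0: "P 0 i = 0" by (rule level_nonres_P0_zero[OF i nonres])
  have A_n: "A n i = 0" for n
  proof (cases "n = 0")
    case True
    show ?thesis
      using level_Euler_A[of i] P0 nonres of_nat_plus_half_neq_0 True by (intro poly_eqI) simp
  next
    case False
    then show ?thesis
      using bracket_L0i_Gn0[where n = n and i = i] P0 nonres by (simp add: poly_ext_iff)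
  qed
  have P_n: "P n i = 0" for n
  proof (cases "n = 0")
    case False
    then show ?thesis
      using bracket_L0i_Ln0[where n = n and i = i] P0 nonres by (simp add: poly_ext_iff)
  qed (simp add: P0)
  show ?thesis using P_n A_n Q_eq B_eq by (simp add: level_vanishes_def)
qed


lemma level_res_one:
  assumes res: "of_nat i + q = 0" and i: "i \<ge> 1" and P_2i: "\<And>m. P m (i + i) = 0"
  obtains c where "\<And>m. P m i = [:c * l powi m:]" and "\<And>m. Q m i = [:c * l powi m:]"
    and "\<And>m. A m i = 0" and "\<And>m. B m i = [:2 * q * c * l powi m:]"
proof -
  have q_eq: "q = - of_nat i" using res by algebra
  have half_nonzero: "of_nat i + q / 2 \<noteq> 0" using q_eq i by simp
  have "shift q (P 0 i) = P 0 i"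
    using bracket_L0i_Gn0[where n = 1 and i = i] res l_nonzero by (simp add: poly_ext_iff)
  then obtain c where P0: "P 0 i = [:c:]" using shift_periodic_imp_const q_nonzero by blast
  have A0: "A 0 i = 0"
  proof (rule ccontr)
    assume nonzero: "A 0 i \<noteq> 0"
    have "B 0 i * A 0 i = 0" using GG_P[of 0 i 0 i] P_2i[of 0] by auto
    then have "B 0 i = 0" using nonzero by simp
    then have "[:0, q:] * A 0 i = [:2 * q * c:]" using B_eq[of 0 i] P0 by simp
    then have "degree ([:0, q:] * A 0 i) = 0" by simp
    moreover have "degree ([:0, q:] * A 0 i) = 1 + degree (A 0 i)"
      using nonzero q_nonzero by (simp add: degree_mult_eq)
    ultimately show False by simp
  qed
  have A_n: "A n i = 0" for n
  proof (cases "n = 0")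
    case False
    then show ?thesis
      using bracket_Ln0_G0i[where n = n and i = i] A0 half_nonzero by (simp add: poly_ext_iff)
  qed (simp add: A0)
  have P_n: "P n i = [:c * l powi n:]" for n
    using bracket_G0i_Gn0[where n = n and i = i] A0 P0 q_nonzero by (simp add: poly_ext_iff)
  show ?thesis
    by (rule that[of c]) (simp_all add: P_n A_n Q_eq B_eq algebra_simps)
qed

lemma level_one:
  obtains b where "q \<noteq> -1 \<longrightarrow> b = 0"
    and "\<And>m. P m 1 = [:kd (q = -1) * b * l powi m:]"
    and "\<And>m. Q m 1 = [:kd (q = -1) * b * l powi m:]"
    and "\<And>m. A m 1 = 0" and "\<And>m. B m 1 = [:2 * q * kd (q = -1) * b * l powi m:]"
proof (cases "q = -1")
  case True
  then have "of_nat 1 + q = 0" "\<And>m. P m (1 + 1) = 0"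
    using level_nonres_vanishes[of 2] by (simp_all add: level_vanishes_def numeral_2_eq_2)
  then obtain c where "\<And>m. P m 1 = [:c * l powi m:]" "\<And>m. Q m 1 = [:c * l powi m:]"
    "\<And>m. A m 1 = 0" "\<And>m. B m 1 = [:2 * q * c * l powi m:]"
    using level_res_one by blast
  then show ?thesis using that[of c] True by (simp add: kd_def)
next
  case False
  then show ?thesis
    using that[of 0] level_nonres_vanishes[of 1] by (simp add: level_vanishes_def add_eq_0_iff)
qed

lemma higher_level_vanishes:
  assumes "i \<ge> 2"
  shows "level_vanishes i"
proof (cases "of_nat i + q = 0")
  case True
  then have "q = - of_nat i" by algebra
  moreover from this assms have "q \<noteq> -1" by auto
  ultimately show ?thesis
    using level_res_vanishes assms level_nonres_vanishes[of 1] level_nonres_vanishes[of "i - 1"]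
    by (simp add: of_nat_diff)
qed (use level_nonres_vanishes assms in simp)

end

lemma Omega_coeffs_level0:
  "Omega_P q l a b m 0 = smult (l powi m) [:- (a * q) * of_int m, 1:]"
  "Omega_Q q l a b m 0 = smult (l powi m) [:- (a * q) * of_int m - of_int m * q / 2, 1:]"
  "Omega_A q l a b m 0 = [:l powi m:]"
  "Omega_B q l a b m 0 = smult (q * l powi m) [:2 * - (a * q) * of_int m, 1:]"
  by (simp_all add: Omega_coeffs_defs kd_def algebra_simps)

lemma Omega_coeffs_level:
  assumes "i \<noteq> 0"
  shows "Omega_P q l a b m i = [:kd (q = -1 \<and> i = 1) * b * l powi m:]"
    "Omega_Q q l a b m i = [:kd (q = -1 \<and> i = 1) * b * l powi m:]"
    "Omega_A q l a b m i = 0"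
    "Omega_B q l a b m i = [:2 * q * kd (q = -1 \<and> i = 1) * b * l powi m:]"
  using assms by (simp_all add: Omega_coeffs_defs kd_def)

theorem (in rb_normal_shift_rep) classification:
  obtains l a b where "l \<noteq> 0" and "q \<noteq> -1 \<longrightarrow> b = 0"
    and "shift_act q P Q A B = Omega_act q l a b"
proof -
  obtain l \<alpha> where "l \<noteq> 0"
    and "\<And>m. P m 0 = smult (l powi m) [:\<alpha> * of_int m, 1:]"
    and "\<And>m. Q m 0 = smult (l powi m) [:\<alpha> * of_int m - of_int m * q / 2, 1:]"
    and "\<And>m. A m 0 = [:l powi m:]"
    and "\<And>m. B m 0 = smult (q * l powi m) [:2 * \<alpha> * of_int m, 1:]"
    using level0_forms by blast
  then interpret L0: rb_level0 q P Q A B l \<alpha>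
    using q_nonzero by unfold_locales auto
  obtain b where b: "q \<noteq> -1 \<longrightarrow> b = 0"
    and level1: "\<And>m. P m 1 = [:kd (q = -1) * b * l powi m:]"
      "\<And>m. Q m 1 = [:kd (q = -1) * b * l powi m:]"
      "\<And>m. A m 1 = 0" "\<And>m. B m 1 = [:2 * q * kd (q = -1) * b * l powi m:]"
    using L0.level_one by blast
  define a where "a = - \<alpha> / q"
  have \<alpha>_eq: "\<alpha> = - (a * q)" using q_nonzero by (simp add: a_def)
  have "P m i = Omega_P q l a b m i \<and> Q m i = Omega_Q q l a b m i
      \<and> A m i = Omega_A q l a b m i \<and> B m i = Omega_B q l a b m i" for m i
  proof (cases i)
    case 0
    then show ?thesis
      by (simp add: Omega_coeffs_level0 L0.P_level0 L0.Q_level0 L0.A_level0 L0.B_level0 \<alpha>_eq)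
  next
    case (Suc j)
    then show ?thesis
      using level1 L0.higher_level_vanishes[of i]
      by (cases j) (simp_all add: Omega_coeffs_level level_vanishes_def kd_def)
  qed
  then have "P = Omega_P q l a b" "Q = Omega_Q q l a b" "A = Omega_A q l a b" "B = Omega_B q l a b"
    by (simp_all add: fun_eq_iff)
  then have "shift_act q P Q A B = Omega_act q l a b"
    by (simp add: Omega_act_eq_shift_act)
  with \<open>l \<noteq> 0\<close> b show ?thesis using that by blast
qed

section \<open>Modules free of rank one over U(eta)\<close>

text \<open>By PBW, U(\<eta>) is identified with C[x] \<oplus> C[x] via
  (f, g) \<mapsto> f(L_{0,0}) + g(L_{0,0}) G_{0,0}.  With T = L_{0,0} and v' = G_{0,0} v, eta_map is
  then the orbit map u \<mapsto> u v.\<close>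
definition eta_map ::
    "(complex \<Rightarrow> 'v \<Rightarrow> 'v) \<Rightarrow> ('v \<Rightarrow> 'v) \<Rightarrow> 'v \<Rightarrow> 'v \<Rightarrow> omega \<Rightarrow> 'v::ab_group_add" where
  "eta_map smul T v v' w = poly_apply smul T (fst w) v + poly_apply smul T (snd w) v'"

definition eta_coeffs :: "omega \<Rightarrow> nat \<times> bool \<Rightarrow> complex" where
  "eta_coeffs w = (\<lambda>(k, e). coeff (if e then snd w else fst w) k)"

lemma clinear_map_eta_map: "cvs smul \<Longrightarrow> clinear_map Omega_smul smul (eta_map smul T v v')"
  by (simp add: clinear_map_def eta_map_def Omega_smul_def poly_apply_add poly_apply_smult
      cvs_add_right algebra_simps)

lemma eta_map_as_sum:
  assumes cvs: "cvs smul" and "degree (fst w) \<le> N" and "degree (snd w) \<le> N"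
  shows "eta_map smul T v v' w
     = (\<Sum>i\<in>{..N} \<times> UNIV. smul (eta_coeffs w i) ((\<lambda>(k, e). (T ^^ k) (if e then v' else v)) i))"
proof -
  have "(\<Sum>i\<in>{..N} \<times> UNIV. smul (eta_coeffs w i) ((\<lambda>(k, e). (T ^^ k) (if e then v' else v)) i))
      = (\<Sum>k\<le>N. \<Sum>e\<in>UNIV. smul (eta_coeffs w (k, e)) ((T ^^ k) (if e then v' else v)))"
    by (simp add: sum.cartesian_product')
  also have "\<dots> = (\<Sum>k\<le>N. smul (coeff (fst w) k) ((T ^^ k) v) + smul (coeff (snd w) k) ((T ^^ k) v'))"
    by (simp add: UNIV_bool eta_coeffs_def add.commute)
  also have "\<dots> = eta_map smul T v v' w"
    using assms by (simp add: sum.distrib eta_map_def poly_apply_bound)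
  finally show ?thesis by simp
qed

lemma eta_map_inj:
  assumes cvs: "cvs smul"
    and basis: "is_basis smul (\<lambda>(k::nat, e::bool). (T ^^ k) (if e then v' else v))"
  shows "inj (eta_map smul T v v')"
proof (rule injI)
  fix w1 w2 :: omega
  assume eq: "eta_map smul T v v' w1 = eta_map smul T v v' w2"
  define w where "w = w1 - w2"
  have zero: "eta_map smul T v v' w = 0"
    using eq clinear_map_diff[OF clinear_map_eta_map[OF cvs]] by (simp add: w_def)
  define N where "N = max (degree (fst w)) (degree (snd w))"
  have support: "{i. eta_coeffs w i \<noteq> 0} \<subseteq> {..N} \<times> UNIV"
    by (auto simp: eta_coeffs_def N_def split: if_splits) (metis coeff_eq_0 le_max_iff_disj not_le)+
  then have fin: "finite {i. eta_coeffs w i \<noteq> 0}"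
    by (rule finite_subset) simp
  have "(\<Sum>i\<in>{i. eta_coeffs w i \<noteq> 0}.
          smul (eta_coeffs w i) ((\<lambda>(k, e). (T ^^ k) (if e then v' else v)) i))
      = (\<Sum>i\<in>{..N} \<times> UNIV. smul (eta_coeffs w i) ((\<lambda>(k, e). (T ^^ k) (if e then v' else v)) i))"
    using support by (intro sum.mono_neutral_left) (auto simp: cvs_zero_left[OF cvs])
  also have "\<dots> = 0"
    using eta_map_as_sum[OF cvs, of w N] zero by (simp add: N_def)
  finally have coeffs_zero: "\<forall>i. eta_coeffs w i = 0"
    using basis fin unfolding is_basis_def by blast
  have "coeff (fst w) k = 0 \<and> coeff (snd w) k = 0" for k
    using coeffs_zero[rule_format, of "(k, False)"] coeffs_zero[rule_format, of "(k, True)"]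
    by (simp add: eta_coeffs_def)
  then show "w1 = w2" by (simp add: w_def prod_eq_iff poly_eq_iff)
qed

lemma eta_map_surj:
  assumes cvs: "cvs smul"
    and basis: "is_basis smul (\<lambda>(k::nat, e::bool). (T ^^ k) (if e then v' else v))"
  shows "surj (eta_map smul T v v')"
proof (rule surjI[of _ "\<lambda>x. SOME w. eta_map smul T v v' w = x"], rule someI_ex)
  fix x
  obtain c where fin: "finite {i. c i \<noteq> 0}"
    and x: "x = (\<Sum>i\<in>{i. c i \<noteq> 0}. smul (c i) ((\<lambda>(k, e). (T ^^ k) (if e then v' else v)) i))"
    using basis unfolding is_basis_def by blast
  define N where "N = Max (insert 0 (fst ` {i. c i \<noteq> 0}))"
  have bound: "c (k, e) = 0" if "k > N" for k e
  proof (rule ccontr)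
    assume "c (k, e) \<noteq> 0"
    then have "k \<le> N" unfolding N_def using fin by (intro Max_ge) force+
    then show False using that by simp
  qed
  define f where "f = Abs_poly (\<lambda>k. c (k, False))"
  define g where "g = Abs_poly (\<lambda>k. c (k, True))"
  have "coeff f = (\<lambda>k. c (k, False))" unfolding f_def by (rule coeff_Abs_poly) (rule bound)
  moreover have "coeff g = (\<lambda>k. c (k, True))" unfolding g_def by (rule coeff_Abs_poly) (rule bound)
  ultimately have "degree f \<le> N" "degree g \<le> N" and "eta_coeffs (f, g) = c"
    by (auto simp: degree_le bound eta_coeffs_def fun_eq_iff)
  then have "eta_map smul T v v' (f, g)
      = (\<Sum>i\<in>{..N} \<times> UNIV. smul (c i) ((\<lambda>(k, e). (T ^^ k) (if e then v' else v)) i))"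
    using eta_map_as_sum[OF cvs, of "(f, g)" N] by simp
  also have "\<dots> = x" unfolding x
    using bound
    by (intro sum.mono_neutral_right) (auto simp: cvs_zero_left[OF cvs] not_le[symmetric])
  finally show "\<exists>w. eta_map smul T v v' w = x" by blast
qed

locale free_rank1_module =
  fixes q :: complex and smul :: "complex \<Rightarrow> 'v::ab_group_add \<Rightarrow> 'v"
    and V0 V1 :: "'v set" and act :: "rb_basis \<Rightarrow> 'v \<Rightarrow> 'v" and v :: 'v
  assumes R_module: "R_module q smul V0 V1 act" and v_even: "v \<in> V0"
    and basis: "is_basis smul
      (\<lambda>(k::nat, e::bool). (act (L 0 0) ^^ k) (if e then act (G 0 0) v else v))"
begin

abbreviation T where "T \<equiv> act (L 0 0)"

abbreviation v' where "v' \<equiv> act (G 0 0) v"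

abbreviation \<Phi> where "\<Phi> \<equiv> eta_map smul T v v'"

lemma cvs: "cvs smul"
  and V0_subspace: "subspace_of smul V0" and V1_subspace: "subspace_of smul V1"
  and V0_inter_V1: "V0 \<inter> V1 = {0}"
  using R_module by (simp_all add: R_module_def super_vs_def)

lemma act_linear: "clinear_map smul smul (act x)"
  and brackets: "R_brackets q smul act"
  using R_module by (simp_all add: R_module_iff_brackets)

lemma bracket_LL: "act (L m i) (act (L n j) y) - act (L n j) (act (L m i) y)
      = smul (cLL q m i n j) (act (L (m + n) (i + j)) y)"
  and bracket_LG: "act (L m i) (act (G n j) y) - act (G n j) (act (L m i) y)
      = smul (cLG q m i n j) (act (G (m + n) (i + j)) y)"
  and bracket_GG: "act (G m i) (act (G n j) y) + act (G n j) (act (G m i) y)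
      = smul (2 * q) (act (L (m + n) (i + j)) y)"
  using brackets unfolding R_brackets_def by blast+

lemma L_even: "y \<in> V0 \<Longrightarrow> act (L m i) y \<in> V0" and L_odd: "y \<in> V1 \<Longrightarrow> act (L m i) y \<in> V1"
  and G_even: "y \<in> V0 \<Longrightarrow> act (G m i) y \<in> V1" and G_odd: "y \<in> V1 \<Longrightarrow> act (G m i) y \<in> V0"
  using R_module unfolding R_module_def by (meson image_subset_iff)+

lemma v'_odd: "v' \<in> V1"
  by (rule G_even[OF v_even])

lemma bij_eta: "bij \<Phi>"
  using eta_map_inj[OF cvs basis] eta_map_surj[OF cvs basis] by (simp add: bij_def)

lemma eta_even: "\<Phi> (f, 0) = poly_apply smul T f v"
  and eta_odd: "\<Phi> (0, g) = poly_apply smul T g v'"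
  by (simp_all add: eta_map_def cvs)

lemma eta_even_in: "\<Phi> (f, 0) \<in> V0"
  unfolding eta_even using V0_subspace v_even L_even by (rule poly_apply_in_subspace)

lemma eta_odd_in: "\<Phi> (0, g) \<in> V1"
  unfolding eta_odd using V1_subspace v'_odd L_odd by (rule poly_apply_in_subspace)

lemma eta_split: "\<Phi> (f, g) = \<Phi> (f, 0) + \<Phi> (0, g)"
  by (simp add: eta_map_def cvs)

lemma inv_eta_even:
  assumes "x \<in> V0"
  shows "snd (inv \<Phi> x) = 0"
proof -
  obtain f g where fg: "inv \<Phi> x = (f, g)" by (cases "inv \<Phi> x")
  then have "x = \<Phi> (f, 0) + \<Phi> (0, g)"
    using surj_f_inv_f[OF bij_is_surj[OF bij_eta], of x] eta_split[of f g] by simp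
  then have "\<Phi> (0, g) = x - \<Phi> (f, 0)" by simp
  moreover have "x - \<Phi> (f, 0) \<in> V0"
    by (rule subspace_diff[OF cvs V0_subspace assms eta_even_in])
  ultimately have "\<Phi> (0, g) \<in> V0 \<inter> V1" using eta_odd_in by (metis IntI)
  then have "\<Phi> (0, g) = \<Phi> 0"
    using V0_inter_V1 clinear_map_zero[OF clinear_map_eta_map[OF cvs]] by simp
  then show ?thesis using fg bij_is_inj[OF bij_eta] by (simp add: inj_eq zero_prod_def)
qed

lemma inv_eta_odd:
  assumes "x \<in> V1"
  shows "fst (inv \<Phi> x) = 0"
proof -
  obtain f g where fg: "inv \<Phi> x = (f, g)" by (cases "inv \<Phi> x")
  then have "x = \<Phi> (f, 0) + \<Phi> (0, g)"
    using surj_f_inv_f[OF bij_is_surj[OF bij_eta], of x] eta_split[of f g] by simp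
  then have "\<Phi> (f, 0) = x - \<Phi> (0, g)" by simp
  moreover have "x - \<Phi> (0, g) \<in> V1"
    by (rule subspace_diff[OF cvs V1_subspace assms eta_odd_in])
  ultimately have "\<Phi> (f, 0) \<in> V0 \<inter> V1" using eta_even_in by (metis IntI)
  then have "\<Phi> (f, 0) = \<Phi> 0"
    using V0_inter_V1 clinear_map_zero[OF clinear_map_eta_map[OF cvs]] by simp
  then show ?thesis using fg bij_is_inj[OF bij_eta] by (simp add: inj_eq zero_prod_def)
qed

lemma even_eq_poly_apply: "x \<in> V0 \<Longrightarrow> x = poly_apply smul T (fst (inv \<Phi> x)) v"
  using inv_eta_even[of x] surj_f_inv_f[OF bij_is_surj[OF bij_eta], of x] eta_even
  by (metis prod.collapse)

lemma odd_eq_poly_apply: "x \<in> V1 \<Longrightarrow> x = poly_apply smul T (snd (inv \<Phi> x)) v'"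
  using inv_eta_odd[of x] surj_f_inv_f[OF bij_is_surj[OF bij_eta], of x] eta_odd
  by (metis prod.collapse)

definition P where "P m i = fst (inv \<Phi> (act (L m i) v))"

definition Q where "Q m i = snd (inv \<Phi> (act (L m i) v'))"

definition A where "A m i = snd (inv \<Phi> (act (G m i) v))"

definition B where "B m i = fst (inv \<Phi> (act (G m i) v'))"

lemma act_L_v: "act (L m i) v = poly_apply smul T (P m i) v"
  and act_L_v': "act (L m i) v' = poly_apply smul T (Q m i) v'"
  and act_G_v: "act (G m i) v = poly_apply smul T (A m i) v'"
  and act_G_v': "act (G m i) v' = poly_apply smul T (B m i) v"
  unfolding P_def Q_def A_def B_def
  by (rule even_eq_poly_apply odd_eq_poly_apply;
      simp add: v_even v'_odd L_even L_odd G_even G_odd)+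

lemma act_L_T: "act (L m i) (T y) = T (act (L m i) y) - smul (of_int m * q) (act (L m i) y)"
proof -
  have "act (L m i) (T y) - T (act (L m i) y) = smul (- (of_int m * q)) (act (L m i) y)"
    using bracket_LL[of m i 0 0 y] by (simp add: cLL_def)
  then show ?thesis using cvs_minus_left[OF cvs] by (simp add: algebra_simps)
qed

lemma act_G_T: "act (G m i) (T y) = T (act (G m i) y) - smul (of_int m * q) (act (G m i) y)"
proof -
  have "T (act (G m i) y) - act (G m i) (T y) = smul (of_int m * q) (act (G m i) y)"
    using bracket_LG[of 0 0 m i y] by (simp add: cLG_def)
  then show ?thesis by (simp add: algebra_simps)
qed

lemma act_eta: "act x (\<Phi> w) = \<Phi> (shift_act q P Q A B x w)"
proof (cases x)
  case (L m i)
  have "act x (\<Phi> w)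
      = act (L m i) (poly_apply smul T (fst w) v) + act (L m i) (poly_apply smul T (snd w) v')"
    by (simp add: L eta_map_def clinear_map_add[OF act_linear])
  also have "\<dots> = \<Phi> (shift_act q P Q A B x w)"
    by (simp add: L poly_apply_commute_shift[OF cvs act_linear act_linear act_L_T[of m i]]
        act_L_v[of m i] act_L_v'[of m i]
        poly_apply_mult[OF cvs act_linear, symmetric] eta_map_def mult.commute)
  finally show ?thesis .
next
  case (G m i)
  have "act x (\<Phi> w)
      = act (G m i) (poly_apply smul T (fst w) v) + act (G m i) (poly_apply smul T (snd w) v')"
    by (simp add: G eta_map_def clinear_map_add[OF act_linear])
  also have "\<dots> = \<Phi> (shift_act q P Q A B x w)"
    by (simp add: G poly_apply_commute_shift[OF cvs act_linear act_linear act_G_T[of m i]]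
        act_G_v[of m i] act_G_v'[of m i]
        poly_apply_mult[OF cvs act_linear, symmetric] eta_map_def mult.commute add.commute)
  finally show ?thesis .
qed

lemma poly_apply_inj_even: "poly_apply smul T p v = poly_apply smul T r v \<Longrightarrow> p = r"
  using bij_is_inj[OF bij_eta] eta_even by (metis inj_eq prod.inject)

lemma poly_apply_inj_odd: "poly_apply smul T p v' = poly_apply smul T r v' \<Longrightarrow> p = r"
  using bij_is_inj[OF bij_eta] eta_odd by (metis inj_eq prod.inject)

lemma G00_v': "act (G 0 0) v' = smul q (T v)"
proof -
  have "smul 2 (act (G 0 0) v') = smul (2 * q) (T v)"
    using bracket_GG[of 0 0 0 0 v] cvs_add_left[OF cvs, of 1 1] cvs_one[OF cvs] by simp
  then have "smul (1 / 2) (smul 2 (act (G 0 0) v')) = smul (1 / 2) (smul (2 * q) (T v))" by simp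
  then show ?thesis by (simp add: cvs_assoc[OF cvs] cvs_one[OF cvs])
qed

lemma rb_normal_shift_rep:
  assumes "q \<noteq> 0"
  shows "rb_normal_shift_rep q P Q A B"
proof -
  have "R_brackets q Omega_smul (shift_act q P Q A B)"
    using brackets bij_is_inj[OF bij_eta] clinear_map_eta_map[OF cvs] act_eta[symmetric]
    by (rule R_brackets_transfer)
  then interpret rb_shift_rep q P Q A B by (simp add: R_brackets_shift_act_iff)
  have x: "poly_apply smul T [:0, c:] w = smul c (T w)" for c w
    by (rule poly_apply_x[OF cvs act_linear])
  show ?thesis
  proof unfold_locales
    show "P 0 0 = [:0, 1:]"
      by (rule poly_apply_inj_even) (simp add: act_L_v[of 0 0, symmetric] x cvs_one[OF cvs])
    show "Q 0 0 = [:0, 1:]"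
      by (rule poly_apply_inj_odd) (simp add: act_L_v'[of 0 0, symmetric] x cvs_one[OF cvs])
    show "A 0 0 = 1"
      by (rule poly_apply_inj_odd) (simp add: act_G_v[of 0 0, symmetric] one_pCons cvs_one[OF cvs])
    show "B 0 0 = [:0, q:]"
      by (rule poly_apply_inj_even) (simp add: act_G_v'[of 0 0, symmetric] x G00_v')
  qed (rule assms)
qed

end

theorem (in free_rank1_module) isomorphic_Omega:
  assumes "q \<noteq> 0"
  obtains l a b where "l \<noteq> 0" and "q \<noteq> -1 \<longrightarrow> b = 0"
    and "R_iso smul V0 V1 act Omega_smul Omega_even Omega_odd (Omega_act q l a b) (inv \<Phi>)"
proof -
  obtain l a b where "l \<noteq> 0" "q \<noteq> -1 \<longrightarrow> b = 0" and act: "shift_act q P Q A B = Omega_act q l a b"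
    by (rule rb_normal_shift_rep.classification[OF rb_normal_shift_rep[OF assms]])
  moreover have "R_iso smul V0 V1 act Omega_smul Omega_even Omega_odd (Omega_act q l a b) (inv \<Phi>)"
    unfolding R_iso_def
  proof (intro conjI allI)
    show "bij (inv \<Phi>)" by (rule bij_imp_bij_inv[OF bij_eta])
    show "clinear_map smul Omega_smul (inv \<Phi>)"
      by (rule clinear_map_inv[OF bij_eta clinear_map_eta_map[OF cvs]])
    show "inv \<Phi> ` V0 \<subseteq> Omega_even" "inv \<Phi> ` V1 \<subseteq> Omega_odd"
      using inv_eta_even inv_eta_odd by (auto simp: Omega_even_def Omega_odd_def)
    show "inv \<Phi> (act x y) = Omega_act q l a b x (inv \<Phi> y)" for x y
      using act_eta[of x "inv \<Phi> y"] bij_inv_eq_iff[OF bij_eta] act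
      by (metis surj_f_inv_f bij_is_surj[OF bij_eta])
  qed
  ultimately show ?thesis using that by blast
qed

theorem free_rank1_isomorphic_Omega:
  assumes q: "q \<noteq> 0" and "R_module q smul V0 V1 act" and "U_eta_free_rank1 smul V0 act"
  shows "\<exists>l a b. l \<noteq> 0 \<and> (q \<noteq> -1 \<longrightarrow> b = 0) \<and>
           R_isomorphic smul V0 V1 act Omega_smul Omega_even Omega_odd (Omega_act q l a b)"
proof -
  obtain v where "free_rank1_module q smul V0 V1 act v"
    using assms unfolding U_eta_free_rank1_def free_rank1_module_def by blast
  then obtain l a b where "l \<noteq> 0" "q \<noteq> -1 \<longrightarrow> b = 0"
    and "R_iso smul V0 V1 act Omega_smul Omega_even Omega_odd (Omega_act q l a b)
           (inv (eta_map smul (act (L 0 0)) v (act (G 0 0) v)))"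
    by (rule free_rank1_module.isomorphic_Omega[OF _ q])
  then show ?thesis unfolding R_isomorphic_def by blast
qed

section \<open>The modules Omega\<close>

lemma Omega_act_L00: "Omega_act q lam a b (L 0 0) w = ([:0, 1:] * fst w, [:0, 1:] * snd w)"
  and Omega_act_G00: "Omega_act q lam a b (G 0 0) w = ([:0, q:] * snd w, fst w)"
  by (simp_all add: Omega_act_eq_shift_act Omega_coeffs_defs kd_def)

theorem R_module_Omega:
  assumes "lam \<noteq> 0" and "q \<noteq> -1 \<longrightarrow> b = 0"
  shows "R_module q Omega_smul Omega_even Omega_odd (Omega_act q lam a b)"
  unfolding Omega_act_eq_shift_act R_module_shift_act_iff by (rule rb_shift_rep_Omega[OF assms])

text \<open>L_{0,0} and G_{0,0} generate Omega from (1, 0).\<close>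
lemma Omega_hom_eq_mult:
  assumes lin: "clinear_map Omega_smul Omega_smul \<phi>" and even: "\<phi> (1, 0) \<in> Omega_even"
    and L00: "\<And>w. \<phi> (Omega_act q lam a b (L 0 0) w) = Omega_act q mu a' b' (L 0 0) (\<phi> w)"
    and G00: "\<And>w. \<phi> (Omega_act q lam a b (G 0 0) w) = Omega_act q mu a' b' (G 0 0) (\<phi> w)"
  shows "\<phi> (f, g) = (f * fst (\<phi> (1, 0)), g * fst (\<phi> (1, 0)))"
proof -
  define c where "c = fst (\<phi> (1, 0))"
  have one: "\<phi> (1, 0) = (c, 0)" using even by (simp add: c_def Omega_even_def prod_eq_iff)
  have even_part: "\<phi> (p, 0) = (p * c, 0)" for p
  proof (induction p)
    case (pCons x p)
    have "(pCons x p, 0) = Omega_smul x (1, 0) + Omega_act q lam a b (L 0 0) (p, 0)"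
      by (simp add: Omega_act_L00 Omega_smul_def)
    then have "\<phi> (pCons x p, 0) = Omega_smul x (\<phi> (1, 0)) + Omega_act q mu a' b' (L 0 0) (\<phi> (p, 0))"
      by (simp add: clinear_map_add[OF lin] clinear_map_smul[OF lin] L00)
    then show ?case
      using pCons.IH one by (simp add: Omega_act_L00 Omega_smul_def mult_pCons_left)
  qed (simp add: clinear_map_zero[OF lin, unfolded zero_prod_def])
  have "\<phi> (0, g) = \<phi> (Omega_act q lam a b (G 0 0) (g, 0))" by (simp add: Omega_act_G00)
  also have "\<dots> = (0, g * c)" by (simp only: G00) (simp add: even_part Omega_act_G00)
  finally have "\<phi> (0, g) = (0, g * c)" .
  moreover have "\<phi> (f, g) = \<phi> (f, 0) + \<phi> (0, g)"
    using clinear_map_add[OF lin, of "(f, 0)" "(0, g)"] by simp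
  ultimately show ?thesis by (simp add: even_part flip: c_def)
qed

theorem Omega_isomorphic_iff:
  assumes q: "q \<noteq> 0" and lam: "lam \<noteq> 0" and "mu \<noteq> 0"
    and qb: "q \<noteq> -1 \<longrightarrow> b = 0 \<and> b' = 0"
  shows "R_isomorphic Omega_smul Omega_even Omega_odd (Omega_act q lam a b)
           Omega_smul Omega_even Omega_odd (Omega_act q mu a' b')
         \<longleftrightarrow> lam = mu \<and> a = a' \<and> b = b'"
proof
  assume "lam = mu \<and> a = a' \<and> b = b'"
  then show "R_isomorphic Omega_smul Omega_even Omega_odd (Omega_act q lam a b)
      Omega_smul Omega_even Omega_odd (Omega_act q mu a' b')"
    unfolding R_isomorphic_def R_iso_def by (intro exI[of _ id]) (auto simp: clinear_map_def)
next
  assume "R_isomorphic Omega_smul Omega_even Omega_odd (Omega_act q lam a b)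
      Omega_smul Omega_even Omega_odd (Omega_act q mu a' b')"
  then obtain \<phi> where bij: "bij \<phi>" and lin: "clinear_map Omega_smul Omega_smul \<phi>"
    and even: "\<phi> ` Omega_even \<subseteq> Omega_even"
    and intertwines: "\<And>x w. \<phi> (Omega_act q lam a b x w) = Omega_act q mu a' b' x (\<phi> w)"
    unfolding R_isomorphic_def R_iso_def by blast
  define c where "c = fst (\<phi> (1, 0))"
  have \<phi>_eq: "\<phi> (f, g) = (f * c, g * c)" for f g
    unfolding c_def using even
    by (intro Omega_hom_eq_mult[OF lin _ intertwines intertwines])
      (auto simp: Omega_even_def image_subset_iff)
  obtain w where "\<phi> w = (1, 0)" using bij_is_surj[OF bij] by (metis surjD)
  then have unit: "fst w * c = 1" using \<phi>_eq[of "fst w" "snd w"] by simp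
  then have "c \<noteq> 0" "fst w \<noteq> 0" by auto
  then have c: "c \<noteq> 0" "degree c = 0"
    using unit degree_mult_eq[of "fst w" c] by simp_all
  have P_eq: "Omega_P q lam a b m i = Omega_P q mu a' b' m i" for m i
  proof -
    have "\<phi> (Omega_act q lam a b (L m i) (1, 0)) = Omega_act q mu a' b' (L m i) (c, 0)"
      using intertwines \<phi>_eq[of 1 0] by simp
    moreover have "shift (of_int m * q) c = c" using c by (metis degree_eq_zeroE shift_const)
    ultimately show ?thesis using c \<phi>_eq by (simp add: Omega_act_eq_shift_act)
  qed
  from arg_cong[OF P_eq[of 1 0], of "\<lambda>p. coeff p 1"] have "lam = mu"
    by (simp add: Omega_P_def kd_def)
  moreover from arg_cong[OF P_eq[of 1 0], of "\<lambda>p. coeff p 0"] have "lam * (q * a) = mu * (q * a')"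
    by (simp add: Omega_P_def kd_def)
  then have "a = a'" using \<open>lam = mu\<close> lam q by simp
  moreover from arg_cong[OF P_eq[of 0 1], of "\<lambda>p. coeff p 0"]
  have "kd (q = -1) * b = kd (q = -1) * b'"
    by (simp add: Omega_P_def kd_def)
  then have "b = b'" using qb by (cases "q = -1") (auto simp: kd_def)
  ultimately show "lam = mu \<and> a = a' \<and> b = b'" by simp
qed

locale Omega_submodule =
  fixes q lam a b :: complex and W :: "omega set"
  assumes submodule: "R_submodule Omega_smul Omega_even Omega_odd (Omega_act q lam a b) W"
begin

lemma zero_in: "0 \<in> W"
  and add_in: "x \<in> W \<Longrightarrow> y \<in> W \<Longrightarrow> x + y \<in> W"
  and smul_in: "x \<in> W \<Longrightarrow> Omega_smul c x \<in> W"
  and act_in: "x \<in> W \<Longrightarrow> Omega_act q lam a b z x \<in> W"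
  and graded: "x \<in> W \<Longrightarrow> \<exists>x0\<in>W \<inter> Omega_even. \<exists>x1\<in>W \<inter> Omega_odd. x = x0 + x1"
  using submodule unfolding R_submodule_def subspace_of_def by blast+

lemma even_mult_in: "(f, 0) \<in> W \<Longrightarrow> (r * f, 0) \<in> W"
proof (induction r)
  case (pCons x r)
  have "(pCons x r * f, 0) = Omega_smul x (f, 0) + Omega_act q lam a b (L 0 0) (r * f, 0)"
    by (simp add: mult_pCons_left Omega_act_L00 Omega_smul_def)
  then show ?case using pCons add_in smul_in act_in by simp
qed (use zero_in in \<open>simp add: zero_prod_def\<close>)

lemma even_diff_in:
  assumes "(f, 0) \<in> W" and "(g, 0) \<in> W"
  shows "(f - g, 0) \<in> W"
proof -
  have "(- g, 0) \<in> W" using smul_in[OF assms(2), of "-1"] by (simp add: Omega_smul_def)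
  from add_in[OF assms(1) this] show ?thesis by simp
qed

lemma even_to_odd_in: "(f, 0) \<in> W \<Longrightarrow> (0, f) \<in> W"
  using act_in[of "(f, 0)" "G 0 0"] by (simp add: Omega_act_G00)

lemma eq_UNIV_if_one_in:
  assumes "(1, 0) \<in> W"
  shows "W = UNIV"
proof -
  have "(fst x, 0) + (0, snd x) \<in> W" for x
    using add_in even_to_odd_in even_mult_in[OF assms] by (metis mult.right_neutral)
  then show ?thesis by auto
qed

lemma exists_even:
  assumes "q \<noteq> 0" and "W \<noteq> {0}"
  obtains f where "f \<noteq> 0" and "(f, 0) \<in> W"
proof -
  obtain w where w: "w \<in> W" "w \<noteq> 0" using assms(2) zero_in by blast
  obtain w0 w1 where w0: "w0 \<in> W \<inter> Omega_even" and w1: "w1 \<in> W \<inter> Omega_odd" and "w = w0 + w1"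
    using graded[OF w(1)] by blast
  show ?thesis
  proof (cases "w0 = 0")
    case False
    moreover have "w0 = (fst w0, 0)" using w0 by (simp add: Omega_even_def prod_eq_iff)
    ultimately show ?thesis using w0 that[of "fst w0"] by (metis IntD1 prod.inject zero_prod_def)
  next
    case True
    then have "snd w1 \<noteq> 0" using w w1 \<open>w = w0 + w1\<close> by (auto simp: Omega_odd_def prod_eq_iff)
    moreover have "Omega_act q lam a b (G 0 0) w1 = ([:0, q:] * snd w1, 0)"
      using w1 by (simp add: Omega_act_G00 Omega_odd_def)
    ultimately show ?thesis
      using that[of "[:0, q:] * snd w1"] act_in[of w1 "G 0 0"] w1 assms(1) by auto
  qed
qed

text \<open>Applying L_{n,0} (if a \<noteq> 0), respectively G_{0,1} G_{n,0} (if q = -1 and b \<noteq> 0),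
  to (f, 0) yields even elements c(n) f(x - n q) with a nonzero polynomial c; they cannot all
  vanish at r.\<close>
lemma even_not_all_vanish:
  assumes q: "q \<noteq> 0" and lam: "lam \<noteq> 0" and qb: "q \<noteq> -1 \<longrightarrow> b = 0" and ab: "a \<noteq> 0 \<or> b \<noteq> 0"
    and f: "(f, 0) \<in> W" "f \<noteq> 0"
  shows "\<exists>h. (h, 0) \<in> W \<and> poly h r \<noteq> 0"
proof (rule ccontr)
  assume "\<not> ?thesis"
  then have vanish: "poly h r = 0" if "(h, 0) \<in> W" for h using that by blast
  show False
  proof (cases "a = 0")
    case False
    have "poly [:r, - (q * a):] (of_nat n) * poly f (r - of_nat n * q) = 0" for n :: nat
    proof -
      have "(Omega_P q lam a b (int n) 0 * shift (of_nat n * q) f, 0) \<in> W"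
        using act_in[OF f(1), of "L (int n) 0"] by (simp add: Omega_act_eq_shift_act)
      from vanish[OF this] have "lam ^ n * (r - of_nat n * q * a) * poly f (r - of_nat n * q) = 0"
        by (simp add: Omega_P_def kd_def algebra_simps)
      then show ?thesis using lam by (simp add: algebra_simps)
    qed
    moreover have "[:r, - (q * a):] \<noteq> 0" using q False by simp
    ultimately show False using poly_eq_0_if_vanishes_on_progression[OF q] f(2) by blast
  next
    case True
    with ab qb have b: "b \<noteq> 0" and q_eq: "q = -1" by auto
    have "poly 1 (of_nat n) * poly f (r - of_nat n * q) = 0" for n :: nat
    proof -
      have "(0, [:lam ^ n:] * shift (of_nat n * q) f) \<in> W"
        using act_in[OF f(1), of "G (int n) 0"]
        by (simp add: Omega_act_eq_shift_act Omega_coeffs_defs kd_def)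
      from act_in[OF this, of "G 0 1"]
      have "(smult (q * (2 * b)) ([:lam ^ n:] * shift (of_nat n * q) f), 0) \<in> W"
        using q_eq by (simp add: Omega_act_eq_shift_act Omega_coeffs_defs kd_def mult.commute)
      from vanish[OF this] have "q * (2 * b) * lam ^ n * poly f (r - of_nat n * q) = 0" by simp
      then show ?thesis using q b lam by simp
    qed
    then show False using poly_eq_0_if_vanishes_on_progression[OF q one_neq_zero] f(2) by blast
  qed
qed

end

lemma Omega_not_simple:
  assumes "a = 0" and "b = 0"
  shows "\<not> R_simple q Omega_smul Omega_even Omega_odd (Omega_act q lam a b)"
proof
  define W where "W = {w :: omega. poly (fst w) 0 = 0}"
  have "R_submodule Omega_smul Omega_even Omega_odd (Omega_act q lam a b) W"
    unfolding R_submodule_def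
  proof (intro conjI ballI allI)
    show "subspace_of Omega_smul W" by (simp add: subspace_of_def W_def Omega_smul_def)
    show "Omega_act q lam a b x w \<in> W" if "w \<in> W" for x w
      using that assms
      by (cases x) (simp_all add: W_def Omega_act_eq_shift_act Omega_coeffs_defs kd_def)
    show "\<exists>w0\<in>W \<inter> Omega_even. \<exists>w1\<in>W \<inter> Omega_odd. w = w0 + w1" if "w \<in> W" for w
      using that by (intro bexI[of _ "(fst w, 0)"] bexI[of _ "(0, snd w)"])
        (auto simp: W_def Omega_even_def Omega_odd_def prod_eq_iff)
  qed
  moreover assume "R_simple q Omega_smul Omega_even Omega_odd (Omega_act q lam a b)"
  ultimately have "W = {0} \<or> W = UNIV" unfolding R_simple_def by blast
  moreover have "(0, 1) \<in> W" and "(1, 0) \<notin> W" by (simp_all add: W_def)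
  ultimately show False by (auto simp: zero_prod_def)
qed

text \<open>The even parts of a nonzero submodule form a nonzero ideal of C[x]; a generator of least
  degree would have a root, at which all its elements vanish.\<close>
lemma Omega_simple:
  assumes q: "q \<noteq> 0" and lam: "lam \<noteq> 0" and qb: "q \<noteq> -1 \<longrightarrow> b = 0" and ab: "a \<noteq> 0 \<or> b \<noteq> 0"
  shows "R_simple q Omega_smul Omega_even Omega_odd (Omega_act q lam a b)"
  unfolding R_simple_def
proof (intro conjI allI impI)
  show "R_module q Omega_smul Omega_even Omega_odd (Omega_act q lam a b)"
    by (rule R_module_Omega[OF lam qb])
  show "\<exists>v :: omega. v \<noteq> 0" by (rule exI[of _ "(1, 0)"]) (simp add: zero_prod_def)
  fix W assume "R_submodule Omega_smul Omega_even Omega_odd (Omega_act q lam a b) W"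
  then interpret Omega_submodule q lam a b W by unfold_locales
  show "W = {0} \<or> W = UNIV"
  proof (cases "W = {0}")
    case False
    then obtain f where "f \<noteq> 0" "(f, 0) \<in> W" using exists_even q by blast
    then obtain f0 where f0: "(f0, 0) \<in> W" "f0 \<noteq> 0"
      and minimal: "\<And>g. (g, 0) \<in> W \<and> g \<noteq> 0 \<Longrightarrow> degree f0 \<le> degree g"
      using ex_has_least_nat[of "\<lambda>f. (f, 0) \<in> W \<and> f \<noteq> 0" _ degree] by blast
    have dvd: "f0 dvd h" if "(h, 0) \<in> W" for h
    proof (rule min_degree_dvd[of "{f. (f, 0) \<in> W}"])
      show "f - g \<in> {f. (f, 0) \<in> W}" if "f \<in> {f. (f, 0) \<in> W}" "g \<in> {f. (f, 0) \<in> W}" for f g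
        using that even_diff_in by simp
      show "r * f \<in> {f. (f, 0) \<in> W}" if "f \<in> {f. (f, 0) \<in> W}" for f r
        using that even_mult_in by simp
    qed (use f0 minimal that in auto)
    have "degree f0 = 0"
    proof (rule ccontr)
      assume "degree f0 \<noteq> 0"
      then obtain r where "poly f0 r = 0" using alg_closed_imp_poly_has_root by blast
      moreover obtain h where h: "(h, 0) \<in> W" "poly h r \<noteq> 0"
        using even_not_all_vanish[OF q lam qb ab f0] by blast
      moreover obtain k where "h = f0 * k" using dvd[OF h(1)] by (rule dvdE)
      ultimately show False by simp
    qed
    then obtain k where "f0 = [:k:]" "k \<noteq> 0" using f0(2) by (metis degree_eq_zeroE pCons_eq_0_iff)
    then have "(1, 0) \<in> W"
      using smul_in[OF f0(1), of "1 / k"] by (simp add: Omega_smul_def one_pCons)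
    then show ?thesis using eq_UNIV_if_one_in by simp
  qed simp
qed

theorem Omega_simple_iff:
  assumes "q \<noteq> 0" and "lam \<noteq> 0" and "q \<noteq> -1 \<longrightarrow> b = 0"
  shows "R_simple q Omega_smul Omega_even Omega_odd (Omega_act q lam a b) \<longleftrightarrow> a \<noteq> 0 \<or> b \<noteq> 0"
  using Omega_simple[OF assms] Omega_not_simple by blast

theorem theorem1p3:
  fixes q lam mu a a' b b' :: complex
  assumes "q \<noteq> 0" and "lam \<noteq> 0" and "mu \<noteq> 0"
    and "q \<noteq> -1 \<longrightarrow> b = 0 \<and> b' = 0"
  shows
    "R_module q Omega_smul Omega_even Omega_odd (Omega_act q lam a b)
     \<and> (R_simple q Omega_smul Omega_even Omega_odd (Omega_act q lam a b) \<longleftrightarrow> a \<noteq> 0 \<or> b \<noteq> 0)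
     \<and> (R_isomorphic Omega_smul Omega_even Omega_odd (Omega_act q lam a b)
                     Omega_smul Omega_even Omega_odd (Omega_act q mu a' b')
          \<longleftrightarrow> lam = mu \<and> a = a' \<and> b = b')
     \<and> (\<forall>(smul :: complex \<Rightarrow> 'v::ab_group_add \<Rightarrow> 'v) V0 V1 act.
          R_module q smul V0 V1 act \<and> U_eta_free_rank1 smul V0 act \<longrightarrow>
          (\<exists>l a0 b0. l \<noteq> 0 \<and> (q \<noteq> -1 \<longrightarrow> b0 = 0) \<and>
             R_isomorphic smul V0 V1 act Omega_smul Omega_even Omega_odd (Omega_act q l a0 b0)))"
proof -
  have b: "q \<noteq> -1 \<longrightarrow> b = 0" using assms(4) by blast
  show ?thesis
    using R_module_Omega[OF assms(2) b] Omega_simple_iff[OF assms(1,2) b]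
      Omega_isomorphic_iff[OF assms] free_rank1_isomorphic_Omega[OF assms(1)]
    by (intro conjI allI impI) auto
qed

end
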